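(* The map $L\mapsto\Psi_L$ restricts to a $\Lambda$-module isomorphism $T^r(V^* )^{\mathrm{OSp}(V)}\xrightarrow{\sim}\Gamma_r^{\mathrm{OSp}(V)}$, where $T^r(V^* )^{\mathrm{OSp}(V)}$ is the set of $\mathrm{OSp}(V)$-invariants of $T^r(V^* )$ and $\Gamma_r^{\mathrm{OSp}(V)}$ is the set of elements of $\Gamma_r$ fixed by $\hat L_g$ for all $g\in\mathrm{OSp}(V)$.
   Context: $\Lambda=\varinjlim\wedge(\mathbb{C}^N)$ is the infinite Grassmann algebra ($\mathbb{Z}_2$-graded, supercommutative; modules are $\mathbb{Z}_2$-graded with $\lambda v=(-1)^{[\lambda][v]}v\lambda$). $V_{\mathbb{C}}$ is a complex superspace of superdimension $(m|2n)$ with nondegenerate even supersymmetric form, $V=V_{\mathbb{C}}\otimes\Lambda$ with the $\Lambda$-bilinearly extended form, $\mathrm{GL}(V)$ the group of invertible even $\Lambda$-linear endomorphisms of $V$, $\mathrm{OSp}(V)$ the subgroup preserving the form, $\mathbf{E}=\mathrm{End}_\Lambda(V)_{\bar0}$. $V^*=\mathrm{Hom}_\Lambda(V,\Lambda)$ with $(g\bar v)(w)=\bar v(g^{-1}w)$; $T^r(V^* )=(V^* )^{\otimes_\Lambda r}$ with diagonal action $\rho_r^*$, identified with $T^r(V)^*$ via the sign-twisted pairing $\gamma(\bar v_1\otimes\cdots\otimes\bar v_r\otimes w_1\otimes\cdots\otimes w_r)=(-1)^J\prod_i\bar v_i(w_i)$, $J=\sum_\mu[w_\mu]([\bar v_{\mu+1}]+\cdots+[\bar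 v_r])$. $\mathcal{P}^r[\mathbf{E}]$ is the space of polynomial functions of degree $r$ on $\mathbf{E}=(\mathrm{End}_{\mathbb{C}}(V_{\mathbb{C}})\otimes\Lambda)_{\bar0}$ (in coordinates $\sum_k b_k\lambda_k$ w.r.t. a homogeneous basis $b_k$ of $\mathrm{End}_{\mathbb{C}}(V_{\mathbb{C}})$: $\Lambda$-linear combinations of degree-$r$ monomials in the $\lambda_k$). $\Psi_L(X,w)=L(Xw_1\otimes\cdots\otimes Xw_r)$ for $w=w_1\otimes\cdots\otimes w_r$. $\hat L_g=L_g\otimes\mathrm{id}$ with $(L_gf)(X)=f(g^{-1}X)$; $\hat R_g=R_g\otimes\rho_r^*(g)$ with $(R_gf)(X)=f(Xg)$. $\Gamma_r=(\mathcal{P}^r[\mathbf{E}]\otimes_\Lambda T^r(V^* ))^{\hat R(\mathrm{GL}(V))}$. *)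

theory Defs
  imports Complex_Main
begin

section \<open>The infinite Grassmann algebra Lambda\<close>

text \<open>An element of Lambda is a finite complex combination of monomials xi_S
 (S a finite set of generator indices, product taken in increasing order).
 Represented as a coefficient function on sets; the carrier picks out the
 genuine elements.\<close>

type_synonym grass = "nat set \<Rightarrow> complex"
type_synonym vec = "nat \<Rightarrow> grass"
type_synonym mat = "nat \<Rightarrow> nat \<Rightarrow> grass"

definition gcarrier :: "grass set" where
  "gcarrier = {a. finite {S. a S \<noteq> 0} \<and> (\<forall>S. a S \<noteq> 0 \<longrightarrow> finite S)}"

definition gzero :: grass where "gzero = (\<lambda>S. 0)"
definition gone :: grass where "gone = (\<lambda>S. if S = {} then 1 else 0)"
definition gadd :: "grass \<Rightarrow> grass \<Rightarrow> grass" where "gadd a b = (\<lambda>S. a S + b S)"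
definition gscale :: "complex \<Rightarrow> grass \<Rightarrow> grass" where "gscale c a = (\<lambda>S. c * a S)"
definition gsum :: "('i \<Rightarrow> grass) \<Rightarrow> 'i set \<Rightarrow> grass" where
  "gsum f A = (\<lambda>S. \<Sum>k\<in>A. f k S)"

text \<open>xi_S * xi_T = gsgn S T * xi_(S union T) for disjoint S, T.\<close>
definition gsgn :: "nat set \<Rightarrow> nat set \<Rightarrow> complex" where
  "gsgn S T = (-1) ^ card {(s, t). s \<in> S \<and> t \<in> T \<and> t < s}"

definition gmul :: "grass \<Rightarrow> grass \<Rightarrow> grass" where
  "gmul a b = (\<lambda>U. if finite U then (\<Sum>S\<in>Pow U. gsgn S (U - S) * a S * b (U - S)) else 0)"

text \<open>Grade involution applied iff the flag is True: a |-> a_even - a_odd.\<close>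
definition galpha :: "bool \<Rightarrow> grass \<Rightarrow> grass" where
  "galpha p a = (if p then (\<lambda>S. (-1) ^ card S * a S) else a)"

definition ghomog :: "bool \<Rightarrow> grass \<Rightarrow> bool" where
  "ghomog q a \<longleftrightarrow> (\<forall>S. a S \<noteq> 0 \<longrightarrow> odd (card S) = q)"

fun gprod_list :: "grass list \<Rightarrow> grass" where
  "gprod_list [] = gone"
| "gprod_list (a # as) = gmul a (gprod_list as)"

section \<open>The superspace V = V_C (x) Lambda, sdim V_C = (m|2n)\<close>

text \<open>Homogeneous basis e_0..e_(N-1), N = m+2n; e_i is odd iff i >= m.
 A vector v = sum_i e_i v_i is given by its coordinates v_i in Lambda.\<close>

definition spar :: "nat \<Rightarrow> nat \<Rightarrow> bool" where "spar m i \<longleftrightarrow> m \<le> i"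

definition svec :: "nat \<Rightarrow> nat \<Rightarrow> vec set" where
  "svec m n = {v. (\<forall>i<m+2*n. v i \<in> gcarrier) \<and> (\<forall>i. m+2*n \<le> i \<longrightarrow> v i = gzero)}"

definition basisvec :: "nat \<Rightarrow> vec" where
  "basisvec j = (\<lambda>i. if i = j then gone else gzero)"

text \<open>Matrices: X e_j = sum_i e_i X_ij.\<close>
definition smat :: "nat \<Rightarrow> nat \<Rightarrow> mat set" where
  "smat m n = {X. \<forall>i j. if i < m+2*n \<and> j < m+2*n then X i j \<in> gcarrier else X i j = gzero}"

definition Emat :: "nat \<Rightarrow> nat \<Rightarrow> mat set" where
  "Emat m n = {X \<in> smat m n. \<forall>i<m+2*n. \<forall>j<m+2*n. ghomog (spar m i \<noteq> spar m j) (X i j)}"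

definition matmul :: "nat \<Rightarrow> nat \<Rightarrow> mat \<Rightarrow> mat \<Rightarrow> mat" where
  "matmul m n X Y = (\<lambda>i j. gsum (\<lambda>k. gmul (X i k) (Y k j)) {..<m+2*n})"

definition matvec :: "nat \<Rightarrow> nat \<Rightarrow> mat \<Rightarrow> vec \<Rightarrow> vec" where
  "matvec m n X v = (\<lambda>i. gsum (\<lambda>k. gmul (X i k) (v k)) {..<m+2*n})"

definition midm :: "nat \<Rightarrow> nat \<Rightarrow> mat" where
  "midm m n = (\<lambda>i j. if i < m+2*n \<and> i = j then gone else gzero)"

definition GLs :: "nat \<Rightarrow> nat \<Rightarrow> mat set" where
  "GLs m n = {g \<in> Emat m n. \<exists>h \<in> Emat m n. matmul m n g h = midm m n \<and> matmul m n h g = midm m n}"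

definition minv :: "nat \<Rightarrow> nat \<Rightarrow> mat \<Rightarrow> mat" where
  "minv m n g = (THE h. h \<in> Emat m n \<and> matmul m n g h = midm m n \<and> matmul m n h g = midm m n)"

text \<open>b is the Gram matrix of the complex form on V_C in the basis e_i;
 its Lambda-bilinear extension: B(e_k a, e_l c) = (-1)^([a][e_l]) b_kl a c.\<close>

definition form_even :: "nat \<Rightarrow> nat \<Rightarrow> (nat \<Rightarrow> nat \<Rightarrow> complex) \<Rightarrow> bool" where
  "form_even m n b \<longleftrightarrow> (\<forall>k<m+2*n. \<forall>l<m+2*n. spar m k \<noteq> spar m l \<longrightarrow> b k l = 0)"

definition form_supersym :: "nat \<Rightarrow> nat \<Rightarrow> (nat \<Rightarrow> nat \<Rightarrow> complex) \<Rightarrow> bool" where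
  "form_supersym m n b \<longleftrightarrow> (\<forall>k<m+2*n. \<forall>l<m+2*n.
      b k l = (if spar m k \<and> spar m l then -1 else 1) * b l k)"

definition form_nondeg :: "nat \<Rightarrow> nat \<Rightarrow> (nat \<Rightarrow> nat \<Rightarrow> complex) \<Rightarrow> bool" where
  "form_nondeg m n b \<longleftrightarrow> (\<forall>x::nat \<Rightarrow> complex.
      (\<forall>l<m+2*n. (\<Sum>k<m+2*n. x k * b k l) = 0) \<longrightarrow> (\<forall>k<m+2*n. x k = 0))"

definition sform :: "nat \<Rightarrow> nat \<Rightarrow> (nat \<Rightarrow> nat \<Rightarrow> complex) \<Rightarrow> vec \<Rightarrow> vec \<Rightarrow> grass" where
  "sform m n b v w = gsum (\<lambda>(k, l). gscale (b k l) (gmul (galpha (spar m k) (v k)) (w l)))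
      ({..<m+2*n} \<times> {..<m+2*n})"

definition OSp :: "nat \<Rightarrow> nat \<Rightarrow> (nat \<Rightarrow> nat \<Rightarrow> complex) \<Rightarrow> mat set" where
  "OSp m n b = {g \<in> GLs m n. \<forall>v\<in>svec m n. \<forall>w\<in>svec m n.
      sform m n b (matvec m n g v) (matvec m n g w) = sform m n b v w}"

section \<open>T^r(V^*) = T^r(V)^*\<close>

definition tuples :: "nat \<Rightarrow> nat \<Rightarrow> nat \<Rightarrow> nat list set" where
  "tuples m n r = {J. length J = r \<and> set J \<subseteq> {..<m+2*n}}"

definition tpar :: "nat \<Rightarrow> nat list \<Rightarrow> bool" where
  "tpar m J \<longleftrightarrow> odd (length (filter (spar m) J))"

text \<open>w_1 (x) ... (x) w_r = sum_J e_J1 (x) ... (x) e_Jr * tcoef m J [w_1,...,w_r].\<close>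
fun tcoef :: "nat \<Rightarrow> nat list \<Rightarrow> vec list \<Rightarrow> grass" where
  "tcoef m [] [] = gone"
| "tcoef m (j # J) (w # ws) = gmul (galpha (tpar m J) (w j)) (tcoef m J ws)"
| "tcoef m _ _ = gzero"

text \<open>A functional L in T^r(V)^* (right Lambda-linear) is given by its values
 c J = L(e_J1 (x) ... (x) e_Jr) on basis tensors.\<close>
definition TVdual :: "nat \<Rightarrow> nat \<Rightarrow> nat \<Rightarrow> (nat list \<Rightarrow> grass) set" where
  "TVdual m n r = {c. \<forall>J. if J \<in> tuples m n r then c J \<in> gcarrier else c J = gzero}"

definition Leval :: "nat \<Rightarrow> nat \<Rightarrow> nat \<Rightarrow> (nat list \<Rightarrow> grass) \<Rightarrow> vec list \<Rightarrow> grass" where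
  "Leval m n r c ws = gsum (\<lambda>J. gmul (c J) (tcoef m J ws)) (tuples m n r)"

text \<open>rho_r^*(g) L = L o rho_r(g^-1), in coordinates.\<close>
definition rho_dual :: "nat \<Rightarrow> nat \<Rightarrow> nat \<Rightarrow> mat \<Rightarrow> (nat list \<Rightarrow> grass) \<Rightarrow> (nat list \<Rightarrow> grass)" where
  "rho_dual m n r g c = (\<lambda>J. if J \<in> tuples m n r
      then Leval m n r c (map (\<lambda>j. matvec m n (minv m n g) (basisvec j)) J) else gzero)"

definition TVinv :: "nat \<Rightarrow> nat \<Rightarrow> nat \<Rightarrow> (nat \<Rightarrow> nat \<Rightarrow> complex) \<Rightarrow> (nat list \<Rightarrow> grass) set" where
  "TVinv m n r b = {c \<in> TVdual m n r. \<forall>g\<in>OSp m n b. rho_dual m n r g c = c}"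

definition tv_add :: "(nat list \<Rightarrow> grass) \<Rightarrow> (nat list \<Rightarrow> grass) \<Rightarrow> (nat list \<Rightarrow> grass)" where
  "tv_add c d = (\<lambda>J. gadd (c J) (d J))"
definition tv_smul :: "grass \<Rightarrow> (nat list \<Rightarrow> grass) \<Rightarrow> (nat list \<Rightarrow> grass)" where
  "tv_smul a c = (\<lambda>J. gmul a (c J))"

definition monoms :: "nat \<Rightarrow> nat \<Rightarrow> nat \<Rightarrow> (nat \<times> nat) list set" where
  "monoms m n r = {\<kappa>. length \<kappa> = r \<and> set \<kappa> \<subseteq> {..<m+2*n} \<times> {..<m+2*n}}"

text \<open>Functions on E (set to 0 outside E): Lambda-linear combinations of
 degree-r monomials in the coordinates X_ij.\<close>
definition Poly :: "nat \<Rightarrow> nat \<Rightarrow> nat \<Rightarrow> (mat \<Rightarrow> grass) set" where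
  "Poly m n r = {f. \<exists>c. (\<forall>\<kappa>. c \<kappa> \<in> gcarrier) \<and>
     f = (\<lambda>X. if X \<in> Emat m n
            then gsum (\<lambda>\<kappa>. gmul (c \<kappa>) (gprod_list (map (\<lambda>(i, j). X i j) \<kappa>))) (monoms m n r)
            else gzero)}"

text \<open>An element of P^r[E] (x) T^r(V^*) is given by its components F J in P^r[E]
 (w.r.t. the basis dual to the e_J); it represents (X, w) |-> Feval F X w.\<close>
definition TP :: "nat \<Rightarrow> nat \<Rightarrow> nat \<Rightarrow> (nat list \<Rightarrow> mat \<Rightarrow> grass) set" where
  "TP m n r = {F. \<forall>J. if J \<in> tuples m n r then F J \<in> Poly m n r else F J = (\<lambda>X. gzero)}"

definition Feval :: "nat \<Rightarrow> nat \<Rightarrow> nat \<Rightarrow> (nat list \<Rightarrow> mat \<Rightarrow> grass) \<Rightarrow> mat \<Rightarrow> vec list \<Rightarrow> grass" where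
  "Feval m n r F X ws = gsum (\<lambda>J. gmul (F J X) (tcoef m J ws)) (tuples m n r)"

text \<open>(R-hat_g F)(X, w) = F(X g, g^-1 w); (L-hat_g F)(X, w) = F(g^-1 X, w).\<close>
definition Rhat :: "nat \<Rightarrow> nat \<Rightarrow> nat \<Rightarrow> mat \<Rightarrow> (nat list \<Rightarrow> mat \<Rightarrow> grass) \<Rightarrow> (nat list \<Rightarrow> mat \<Rightarrow> grass)" where
  "Rhat m n r g F = (\<lambda>J. if J \<in> tuples m n r
      then (\<lambda>X. if X \<in> Emat m n then Feval m n r F (matmul m n X g)
                   (map (\<lambda>j. matvec m n (minv m n g) (basisvec j)) J) else gzero)
      else (\<lambda>X. gzero))"

definition Lhat :: "nat \<Rightarrow> nat \<Rightarrow> nat \<Rightarrow> mat \<Rightarrow> (nat list \<Rightarrow> mat \<Rightarrow> grass) \<Rightarrow> (nat list \<Rightarrow> mat \<Rightarrow> grass)" where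
  "Lhat m n r g F = (\<lambda>J. if J \<in> tuples m n r
      then (\<lambda>X. if X \<in> Emat m n then F J (matmul m n (minv m n g) X) else gzero)
      else (\<lambda>X. gzero))"

definition Gamma :: "nat \<Rightarrow> nat \<Rightarrow> nat \<Rightarrow> (nat list \<Rightarrow> mat \<Rightarrow> grass) set" where
  "Gamma m n r = {F \<in> TP m n r. \<forall>g\<in>GLs m n. Rhat m n r g F = F}"

definition GammaOSp :: "nat \<Rightarrow> nat \<Rightarrow> nat \<Rightarrow> (nat \<Rightarrow> nat \<Rightarrow> complex) \<Rightarrow> (nat list \<Rightarrow> mat \<Rightarrow> grass) set" where
  "GammaOSp m n r b = {F \<in> Gamma m n r. \<forall>g\<in>OSp m n b. Lhat m n r g F = F}"

definition tp_add :: "(nat list \<Rightarrow> mat \<Rightarrow> grass) \<Rightarrow> (nat list \<Rightarrow> mat \<Rightarrow> grass) \<Rightarrow> (nat list \<Rightarrow> mat \<Rightarrow> grass)" where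
  "tp_add F G = (\<lambda>J X. gadd (F J X) (G J X))"
definition tp_smul :: "grass \<Rightarrow> (nat list \<Rightarrow> mat \<Rightarrow> grass) \<Rightarrow> (nat list \<Rightarrow> mat \<Rightarrow> grass)" where
  "tp_smul a F = (\<lambda>J X. gmul a (F J X))"

text \<open>Psi_L(X, w) = L(X w_1 (x) ... (x) X w_r), in components.\<close>
definition Psi :: "nat \<Rightarrow> nat \<Rightarrow> nat \<Rightarrow> (nat list \<Rightarrow> grass) \<Rightarrow> (nat list \<Rightarrow> mat \<Rightarrow> grass)" where
  "Psi m n r c = (\<lambda>J. if J \<in> tuples m n r
      then (\<lambda>X. if X \<in> Emat m n then Leval m n r c (map (\<lambda>j. matvec m n X (basisvec j)) J) else gzero)
      else (\<lambda>X. gzero))"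

end

theory Submission
  imports Defs "Jordan_Normal_Form.Determinant" "Jordan_Normal_Form.Char_Poly"
begin

text \<open>
  \<open>\<Psi>\<^sub>c(X)\<close> is \<open>c\<close> evaluated on the columns of \<open>X\<close>, hence polynomial in \<open>X\<close>; it is invariant
  under \<open>R\<^sub>g\<close> because the tensor power of \<open>X g\<close> is that of \<open>X\<close> composed with that of \<open>g\<close>,
  and \<open>L\<^sub>g\<close>-invariant when \<open>c\<close> is \<open>\<rho>\<^sup>*(g)\<close>-invariant. It is injective since \<open>\<Psi>\<^sub>c(1) = c\<close>.
  Conversely, \<open>R\<close>-invariance forces every \<open>F \<in> \<Gamma>\<^sub>r\<close> to agree with \<open>\<Psi>\<^bsub>F(1)\<^esub>\<close> on \<open>GL(V)\<close>, and
  \<open>GL(V)\<close> is dense in \<open>E\<close> in the following algebraic sense: for \<open>X \<in> E\<close>, \<open>X + t\<close> is invertible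
  for all but finitely many \<open>t \<in> \<complex>\<close>, because its body is then an invertible complex matrix
  and its soul is nilpotent. Since \<open>F(X + t) - \<Psi>\<^bsub>F(1)\<^esub>(X + t)\<close> is coefficientwise a polynomial
  in \<open>t\<close>, it vanishes at \<open>t = 0\<close>.
\<close>

definition ginversions :: "nat set \<Rightarrow> nat set \<Rightarrow> (nat \<times> nat) set" where
  "ginversions S T = {(s, t). s \<in> S \<and> t \<in> T \<and> t < s}"

lemma gsgn_eq_inversions: "gsgn S T = (-1) ^ card (ginversions S T)"
  by (simp add: gsgn_def ginversions_def)

lemma ginversions_subset: "ginversions S T \<subseteq> S \<times> T"
  by (auto simp: ginversions_def)

lemma finite_ginversions: "finite S \<Longrightarrow> finite T \<Longrightarrow> finite (ginversions S T)"
  using ginversions_subset by (rule finite_subset) simp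

lemma gsgn_union_right:
  assumes "finite S" "finite T" "finite W" "T \<inter> W = {}"
  shows "gsgn S (T \<union> W) = gsgn S T * gsgn S W"
proof -
  have "ginversions S (T \<union> W) = ginversions S T \<union> ginversions S W"
    by (auto simp: ginversions_def)
  moreover have "ginversions S T \<inter> ginversions S W = {}"
    using assms(4) by (auto simp: ginversions_def)
  ultimately show ?thesis
    using assms by (simp add: gsgn_eq_inversions card_Un_disjoint finite_ginversions power_add)
qed

lemma gsgn_union_left:
  assumes "finite S" "finite T" "finite W" "S \<inter> T = {}"
  shows "gsgn (S \<union> T) W = gsgn S W * gsgn T W"
proof -
  have "ginversions (S \<union> T) W = ginversions S W \<union> ginversions T W"
    by (auto simp: ginversions_def)
  moreover have "ginversions S W \<inter> ginversions T W = {}"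
    using assms(4) by (auto simp: ginversions_def)
  ultimately show ?thesis
    using assms by (simp add: gsgn_eq_inversions card_Un_disjoint finite_ginversions power_add)
qed

lemma gsgn_swap:
  assumes "finite S" "finite T" "S \<inter> T = {}"
  shows "gsgn T S = gsgn S T * (-1) ^ (card S * card T)"
proof -
  have split: "S \<times> T = ginversions S T \<union> prod.swap ` ginversions T S"
    using assms(3) by (auto simp: ginversions_def image_iff)
  have disj: "ginversions S T \<inter> prod.swap ` ginversions T S = {}"
    by (auto simp: ginversions_def)
  have "card S * card T = card (ginversions S T) + card (ginversions T S)"
    using arg_cong[OF split, of card] assms
    by (simp add: card_cartesian_product card_Un_disjoint[OF _ _ disj] finite_ginversions card_image)
  hence "(-1::complex) ^ (card S * card T) = gsgn S T * gsgn T S"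
    by (simp add: gsgn_eq_inversions power_add)
  moreover have "gsgn S T * gsgn S T = 1"
    by (simp add: gsgn_eq_inversions flip: power_add power_mult_distrib)
  ultimately show ?thesis by (metis mult.assoc mult.left_neutral)
qed

lemma gsgn_empty[simp]: "gsgn {} T = 1" "gsgn S {} = 1"
  by (simp_all add: gsgn_def)

lemma gsgn_cocycle:
  assumes "finite S" "finite R" "finite W" "S \<inter> R = {}" "S \<inter> W = {}" "R \<inter> W = {}"
  shows "gsgn (S \<union> R) W * gsgn S R = gsgn S (R \<union> W) * gsgn R W"
  using assms by (simp add: gsgn_union_left gsgn_union_right)

section \<open>The Grassmann algebra\<close>

definition gzero_on_infinite :: "grass \<Rightarrow> bool" where
  "gzero_on_infinite a \<longleftrightarrow> (\<forall>U. infinite U \<longrightarrow> a U = 0)"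

lemma gmul_infinite[simp]: "infinite U \<Longrightarrow> gmul a b U = 0"
  by (simp add: gmul_def)

lemma gmul_finite: "finite U \<Longrightarrow> gmul a b U = (\<Sum>S\<in>Pow U. gsgn S (U-S) * a S * b (U-S))"
  by (simp add: gmul_def)

lemma gcarrier_zero_on_infinite: "a \<in> gcarrier \<Longrightarrow> gzero_on_infinite a"
  by (auto simp: gcarrier_def gzero_on_infinite_def)

lemma gmul_gadd_left: "gmul (gadd a a') b = gadd (gmul a b) (gmul a' b)"
  by (rule ext) (simp add: gmul_def gadd_def algebra_simps sum.distrib)

lemma gmul_gadd_right: "gmul b (gadd a a') = gadd (gmul b a) (gmul b a')"
  by (rule ext) (simp add: gmul_def gadd_def algebra_simps sum.distrib)

lemma gmul_gsum_left: "gmul (gsum f A) b = gsum (\<lambda>k. gmul (f k) b) A"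
  by (rule ext)
    (simp add: gmul_def gsum_def sum_distrib_left sum_distrib_right sum.swap[of _ A] algebra_simps)

lemma gmul_gsum_right: "gmul b (gsum f A) = gsum (\<lambda>k. gmul b (f k)) A"
  by (rule ext)
    (simp add: gmul_def gsum_def sum_distrib_left sum_distrib_right sum.swap[of _ A] algebra_simps)

lemma gmul_gscale_left: "gmul (gscale c a) b = gscale c (gmul a b)"
  by (rule ext) (simp add: gmul_def gscale_def sum_distrib_left algebra_simps)

lemma gmul_gscale_right: "gmul a (gscale c b) = gscale c (gmul a b)"
  by (rule ext) (simp add: gmul_def gscale_def sum_distrib_left algebra_simps)

lemma gmul_gzero[simp]: "gmul gzero b = gzero" "gmul a gzero = gzero"
  by (rule ext, simp add: gmul_def gzero_def)+

lemma gzero_on_infinite_gone[simp]: "gzero_on_infinite gone"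
  by (simp add: gzero_on_infinite_def gone_def)

lemma gmul_gone_right:
  assumes "gzero_on_infinite a" shows "gmul a gone = a"
proof (rule ext)
  fix U show "gmul a gone U = a U"
  proof (cases "finite U")
    case True
    have "gmul a gone U = (\<Sum>S\<in>Pow U. if S = U then a U else 0)"
      unfolding gmul_finite[OF True] by (rule sum.cong) (auto simp: gone_def)
    with True show ?thesis by simp
  qed (use assms in \<open>simp add: gzero_on_infinite_def\<close>)
qed

lemma gmul_gone_left:
  assumes "gzero_on_infinite a" shows "gmul gone a = a"
proof (rule ext)
  fix U show "gmul gone a U = a U"
  proof (cases "finite U")
    case True
    have "gmul gone a U = (\<Sum>S\<in>Pow U. if S = {} then a U else 0)"
      unfolding gmul_finite[OF True] by (rule sum.cong) (auto simp: gone_def)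
    with True show ?thesis by simp
  qed (use assms in \<open>simp add: gzero_on_infinite_def\<close>)
qed

lemma gmul_gmul_finite:
  assumes "finite U"
  shows "gmul (gmul a b) c U = (\<Sum>(T, S)\<in>Sigma (Pow U) Pow.
           gsgn T (U-T) * gsgn S (T-S) * a S * b (T-S) * c (U-T))"
    and "gmul a (gmul b c) U = (\<Sum>(S, R)\<in>Sigma (Pow U) (\<lambda>S. Pow (U-S)).
           gsgn S (U-S) * gsgn R (U-S-R) * a S * b R * c (U-S-R))"
proof -
  have fin: "\<And>T. T \<in> Pow U \<Longrightarrow> finite T" using assms by (meson PowD finite_subset)
  show "gmul (gmul a b) c U = (\<Sum>(T, S)\<in>Sigma (Pow U) Pow.
           gsgn T (U-T) * gsgn S (T-S) * a S * b (T-S) * c (U-T))"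
    unfolding gmul_finite[OF assms] using assms fin
    by (subst sum.Sigma[symmetric])
       (auto intro!: sum.cong simp: gmul_finite sum_distrib_left sum_distrib_right algebra_simps)
  show "gmul a (gmul b c) U = (\<Sum>(S, R)\<in>Sigma (Pow U) (\<lambda>S. Pow (U-S)).
           gsgn S (U-S) * gsgn R (U-S-R) * a S * b R * c (U-S-R))"
    unfolding gmul_finite[OF assms] using assms
    by (subst sum.Sigma[symmetric])
       (auto intro!: sum.cong simp: gmul_finite sum_distrib_left sum_distrib_right algebra_simps)
qed

lemma gmul_assoc: "gmul (gmul a b) c = gmul a (gmul b c)"
proof (rule ext)
  fix U show "gmul (gmul a b) c U = gmul a (gmul b c) U"
  proof (cases "finite U")
    case True
    have sign: "gsgn T (U - T) * gsgn S (T - S) = gsgn S (U - S) * gsgn (T - S) (U - S - (T - S))"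
      if "S \<subseteq> T" "T \<subseteq> U" for S T
    proof -
      have "gsgn (S \<union> (T - S)) (U - T) * gsgn S (T - S) = gsgn S ((T - S) \<union> (U - T)) * gsgn (T - S) (U - T)"
        by (rule gsgn_cocycle) (use that True in \<open>auto intro: finite_subset\<close>)
      moreover have "S \<union> (T - S) = T" "(T - S) \<union> (U - T) = U - S" "U - S - (T - S) = U - T"
        using that by auto
      ultimately show ?thesis by simp
    qed
    have diff: "U - S - (T - S) = U - T" if "S \<subseteq> T" for S T
      using that by auto
    show ?thesis
      unfolding gmul_gmul_finite[OF True]
      by (rule sum.reindex_bij_witness[of _ "\<lambda>(S, R). (S \<union> R, S)" "\<lambda>(T, S). (S, T - S)"])
         (auto simp: sign diff Un_Diff Int_absorb2)
  qed simp
qed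

lemma gmul_nonzero_split:
  assumes "gmul a b U \<noteq> 0"
  shows "finite U \<and> (\<exists>S\<subseteq>U. a S \<noteq> 0 \<and> b (U - S) \<noteq> 0)"
proof -
  have fin: "finite U" using assms gmul_infinite by blast
  with assms obtain S where "S \<in> Pow U" "gsgn S (U-S) * a S * b (U-S) \<noteq> 0"
    by (metis (no_types, lifting) gmul_finite sum.neutral)
  with fin show ?thesis by auto
qed

lemma card_Diff_split: "finite U \<Longrightarrow> S \<subseteq> U \<Longrightarrow> card U = card S + card (U - S)"
  by (metis card_Diff_subset card_mono finite_subset le_add_diff_inverse)

lemma galpha_gmul: "galpha p (gmul a b) = gmul (galpha p a) (galpha p b)"
proof (cases p)
  case True
  show ?thesis
  proof (rule ext)
    fix U show "galpha p (gmul a b) U = gmul (galpha p a) (galpha p b) U"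
    proof (cases "finite U")
      case fin: True
      have "galpha p (gmul a b) U = (\<Sum>S\<in>Pow U. (-1)^card U * (gsgn S (U-S) * a S * b (U-S)))"
        using True by (simp add: galpha_def gmul_finite fin sum_distrib_left)
      also have "\<dots> = (\<Sum>S\<in>Pow U. gsgn S (U-S) * ((-1)^card S * a S) * ((-1)^card (U-S) * b (U-S)))"
        by (rule sum.cong[OF refl]) (simp add: card_Diff_split[OF fin] power_add)
      finally show ?thesis using True by (simp add: galpha_def gmul_finite fin)
    qed (simp add: galpha_def)
  qed
qed (simp add: galpha_def)

lemma galpha_gsum: "galpha p (gsum f A) = gsum (\<lambda>k. galpha p (f k)) A"
  by (rule ext) (simp add: galpha_def gsum_def sum_distrib_left)

lemma galpha_gone[simp]: "galpha p gone = gone"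
  by (rule ext) (simp add: galpha_def gone_def)

lemma galpha_gzero[simp]: "galpha p gzero = gzero"
  by (rule ext) (simp add: galpha_def gzero_def)

lemma galpha_galpha: "galpha p (galpha q a) = galpha (p \<noteq> q) a"
  by (rule ext) (auto simp: galpha_def)

lemma galpha_homog:
  assumes "ghomog q a" shows "galpha p a = (if p \<and> q then gscale (-1) a else a)"
proof (rule ext)
  fix S show "galpha p a S = (if p \<and> q then gscale (-1) a else a) S"
  proof (cases "a S = 0")
    case False
    hence "odd (card S) = q" using assms by (simp add: ghomog_def)
    thus ?thesis by (cases q) (auto simp: galpha_def gscale_def)
  qed (simp add: galpha_def gscale_def)
qed

lemma gmul_commute_homog:
  assumes "ghomog q y" shows "gmul a y = gmul y (galpha q a)"
proof (rule ext)
  fix U show "gmul a y U = gmul y (galpha q a) U"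
  proof (cases "finite U")
    case fin: True
    have "gmul y (galpha q a) U = (\<Sum>T\<in>Pow U. gsgn T (U-T) * y T * galpha q a (U-T))"
      by (simp add: gmul_finite fin)
    also have "\<dots> = (\<Sum>S\<in>Pow U. gsgn (U-S) (U-(U-S)) * y (U-S) * galpha q a (U-(U-S)))"
      by (rule sum.reindex_bij_witness[of _ "\<lambda>S. U - S" "\<lambda>S. U - S"])
         (auto simp: Diff_Diff_Int Int_absorb1 Int_absorb2)
    also have "\<dots> = (\<Sum>S\<in>Pow U. gsgn S (U-S) * a S * y (U-S))"
    proof (rule sum.cong[OF refl])
      fix S assume S: "S \<in> Pow U"
      have compl: "U - (U - S) = S" using S by auto
      show "gsgn (U-S) (U-(U-S)) * y (U-S) * galpha q a (U-(U-S)) = gsgn S (U-S) * a S * y (U-S)"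
      proof (cases "y (U - S) = 0")
        case False
        hence par: "odd (card (U - S)) = q" using assms by (simp add: ghomog_def)
        have "gsgn (U - S) S = gsgn S (U - S) * ((-1)^card (U - S))^card S"
          using S fin by (subst gsgn_swap) (auto intro: finite_subset simp flip: power_mult)
        also have "((-1::complex)^card (U - S))^card S = (if q then (-1)^card S else 1)"
          using par by (cases q) simp_all
        finally show ?thesis unfolding compl by (auto simp: galpha_def)
      qed simp
    qed
    finally show ?thesis by (simp add: gmul_finite fin)
  qed simp
qed

lemma ghomog_gmul: "ghomog p a \<Longrightarrow> ghomog q b \<Longrightarrow> ghomog (p \<noteq> q) (gmul a b)"
  unfolding ghomog_def
proof (intro allI impI)
  fix U assume a: "\<forall>S. a S \<noteq> 0 \<longrightarrow> odd (card S) = p" and b: "\<forall>S. b S \<noteq> 0 \<longrightarrow> odd (card S) = q"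
    and nz: "gmul a b U \<noteq> 0"
  obtain S where S: "finite U" "S \<subseteq> U" "a S \<noteq> 0" "b (U - S) \<noteq> 0"
    using gmul_nonzero_split[OF nz] by blast
  have "card U = card S + card (U - S)" using card_Diff_split[OF S(1,2)] .
  moreover have "odd (card S) = p" using a S(3) by blast
  moreover have "odd (card (U - S)) = q" using b S(4) by blast
  ultimately show "odd (card U) = (p \<noteq> q)" by (simp; argo)
qed

lemma ghomog_gadd:
  assumes "ghomog p a" "ghomog p b" shows "ghomog p (gadd a b)"
  unfolding ghomog_def
proof (intro allI impI)
  fix S assume "gadd a b S \<noteq> 0"
  hence "a S \<noteq> 0 \<or> b S \<noteq> 0" by (auto simp: gadd_def)
  thus "odd (card S) = p" using assms unfolding ghomog_def by blast
qed

lemma ghomog_gsum: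
  assumes "\<And>k. k \<in> A \<Longrightarrow> ghomog p (f k)" shows "ghomog p (gsum f A)"
  unfolding ghomog_def
proof (intro allI impI)
  fix S assume "gsum f A S \<noteq> 0"
  then obtain k where "k \<in> A" "f k S \<noteq> 0" unfolding gsum_def by (meson sum.neutral)
  thus "odd (card S) = p" using assms unfolding ghomog_def by blast
qed

lemma ghomog_gzero[simp]: "ghomog p gzero"
  by (simp add: ghomog_def gzero_def)

lemma ghomog_gone[simp]: "ghomog False gone"
  by (simp add: ghomog_def gone_def)

lemma ghomog_gscale: "ghomog p a \<Longrightarrow> ghomog p (gscale c a)"
  unfolding ghomog_def gscale_def by simp

lemma ghomog_galpha: "ghomog p a \<Longrightarrow> ghomog p (galpha q a)"
  unfolding ghomog_def galpha_def by simp

lemma gcarrierI: "finite {S. a S \<noteq> 0} \<Longrightarrow> (\<And>S. a S \<noteq> 0 \<Longrightarrow> finite S) \<Longrightarrow> a \<in> gcarrier"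
  by (simp add: gcarrier_def)

lemma gcarrier_gzero[simp]: "gzero \<in> gcarrier"
  by (simp add: gcarrier_def gzero_def)

lemma gcarrier_gone[simp]: "gone \<in> gcarrier"
  by (simp add: gcarrier_def gone_def)

lemma gcarrier_mono:
  assumes "a \<in> gcarrier" "\<And>S. b S \<noteq> 0 \<Longrightarrow> a S \<noteq> 0" shows "b \<in> gcarrier"
proof (rule gcarrierI)
  have "{S. b S \<noteq> 0} \<subseteq> {S. a S \<noteq> 0}" using assms(2) by auto
  thus "finite {S. b S \<noteq> 0}" using assms(1) by (simp add: gcarrier_def finite_subset)
  show "\<And>S. b S \<noteq> 0 \<Longrightarrow> finite S" using assms by (simp add: gcarrier_def)
qed

lemma gcarrier_gadd:
  assumes "a \<in> gcarrier" "b \<in> gcarrier" shows "gadd a b \<in> gcarrier"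
proof (rule gcarrierI)
  have "{S. gadd a b S \<noteq> 0} \<subseteq> {S. a S \<noteq> 0} \<union> {S. b S \<noteq> 0}" by (auto simp: gadd_def)
  moreover have "finite ({S. a S \<noteq> 0} \<union> {S. b S \<noteq> 0})" using assms by (simp add: gcarrier_def)
  ultimately show "finite {S. gadd a b S \<noteq> 0}" by (rule finite_subset)
  show "finite S" if "gadd a b S \<noteq> 0" for S
  proof -
    have "a S \<noteq> 0 \<or> b S \<noteq> 0" using that by (auto simp: gadd_def)
    thus ?thesis using assms unfolding gcarrier_def by blast
  qed
qed

lemma gcarrier_gscale: "a \<in> gcarrier \<Longrightarrow> gscale c a \<in> gcarrier"
  by (erule gcarrier_mono) (simp add: gscale_def)

lemma gcarrier_gsum: "finite A \<Longrightarrow> (\<And>k. k \<in> A \<Longrightarrow> f k \<in> gcarrier) \<Longrightarrow> gsum f A \<in> gcarrier"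
proof (induction A rule: finite_induct)
  case empty
  then show ?case by (simp add: gsum_def flip: gzero_def)
next
  case (insert x F)
  have "gsum f (insert x F) = gadd (f x) (gsum f F)"
    using insert by (simp add: gsum_def gadd_def)
  then show ?case using insert by (simp add: gcarrier_gadd)
qed

lemma gcarrier_gmul:
  assumes "a \<in> gcarrier" "b \<in> gcarrier" shows "gmul a b \<in> gcarrier"
proof (rule gcarrierI)
  have "{U. gmul a b U \<noteq> 0} \<subseteq> (\<lambda>(S, T). S \<union> T) ` ({S. a S \<noteq> 0} \<times> {S. b S \<noteq> 0})"
  proof
    fix U assume "U \<in> {U. gmul a b U \<noteq> 0}"
    then obtain S where "S \<subseteq> U" "a S \<noteq> 0" "b (U - S) \<noteq> 0" using gmul_nonzero_split by blast
    thus "U \<in> (\<lambda>(S, T). S \<union> T) ` ({S. a S \<noteq> 0} \<times> {S. b S \<noteq> 0})"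
      by (intro image_eqI[of _ _ "(S, U - S)"]) auto
  qed
  moreover have "finite ((\<lambda>(S, T). S \<union> T) ` ({S. a S \<noteq> 0} \<times> {S. b S \<noteq> 0}))"
    using assms by (simp add: gcarrier_def)
  ultimately show "finite {U. gmul a b U \<noteq> 0}" by (rule finite_subset)
  show "\<And>U. gmul a b U \<noteq> 0 \<Longrightarrow> finite U" using gmul_nonzero_split by blast
qed

lemma gcarrier_gprod_list: "(\<And>x. x \<in> set xs \<Longrightarrow> x \<in> gcarrier) \<Longrightarrow> gprod_list xs \<in> gcarrier"
  by (induction xs) (simp_all add: gcarrier_gmul)

lemma gsum_swap: "gsum (\<lambda>l. gsum (\<lambda>k. f k l) A) B = gsum (\<lambda>k. gsum (\<lambda>l. f k l) B) A"
  unfolding gsum_def by (rule ext) (simp add: sum.swap[of _ B])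

lemma gsum_gmul_gsum:
  "gsum (\<lambda>l. gmul (gsum (\<lambda>k. gmul (x k) (y k l)) A) (z l)) B
   = gsum (\<lambda>k. gmul (x k) (gsum (\<lambda>l. gmul (y k l) (z l)) B)) A"
  unfolding gmul_gsum_left gmul_gsum_right gmul_assoc by (rule gsum_swap)

lemma gsum_gadd: "gsum (\<lambda>k. gadd (f k) (g k)) A = gadd (gsum f A) (gsum g A)"
  by (rule ext) (simp add: gsum_def gadd_def sum.distrib)

lemma gsum_gscale: "gsum (\<lambda>k. gscale c (f k)) A = gscale c (gsum f A)"
  by (rule ext) (simp add: gsum_def gscale_def sum_distrib_left)

lemma gsum_cong: "(\<And>k. k \<in> A \<Longrightarrow> f k = g k) \<Longrightarrow> gsum f A = gsum g A"
  unfolding gsum_def by (rule ext) (rule sum.cong, auto)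

lemma gsum_reindex: "inj_on h A \<Longrightarrow> gsum f (h ` A) = gsum (\<lambda>x. f (h x)) A"
  unfolding gsum_def by (rule ext) (simp add: sum.reindex)

lemma gsum_cartesian: "gsum f (A \<times> B) = gsum (\<lambda>a. gsum (\<lambda>b. f (a, b)) B) A"
  unfolding gsum_def by (rule ext) (simp add: sum.cartesian_product)

lemma gsum_mono_neutral:
  assumes "finite A" "B \<subseteq> A" "\<And>x. x \<in> A - B \<Longrightarrow> f x = gzero"
  shows "gsum f A = gsum f B"
  unfolding gsum_def by (rule ext, rule sum.mono_neutral_right) (use assms in \<open>auto simp: gzero_def\<close>)

lemma gsum_single:
  assumes "finite A" "i \<in> A" "\<And>k. k \<in> A \<Longrightarrow> k \<noteq> i \<Longrightarrow> f k = gzero"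
  shows "gsum f A = f i"
  using gsum_mono_neutral[of A "{i}" f] assms by (simp add: gsum_def)

lemma gsum_singleton[simp]: "gsum f {x} = f x"
  by (simp add: gsum_def)

lemma gsum_gzero: "(\<And>k. k \<in> A \<Longrightarrow> f k = gzero) \<Longrightarrow> gsum f A = gzero"
  unfolding gsum_def gzero_def by simp

lemma gadd_gzero[simp]: "gadd a gzero = a" "gadd gzero a = a"
  by (simp_all add: gadd_def gzero_def)

lemma gscale_gzero[simp]: "gscale c gzero = gzero"
  by (simp add: gscale_def gzero_def)

lemma gscale_zero[simp]: "gscale 0 a = gzero"
  by (simp add: gscale_def gzero_def)

lemma gscale_one[simp]: "gscale 1 a = a"
  by (simp add: gscale_def)

lemma gscale_gscale: "gscale c (gscale d a) = gscale (c * d) a"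
  by (simp add: gscale_def mult.assoc)

section \<open>Supermatrices over the Grassmann algebra\<close>

lemma smat_entry:
  "X \<in> smat m n \<Longrightarrow> if i < m+2*n \<and> j < m+2*n then X i j \<in> gcarrier else X i j = gzero"
  unfolding smat_def by blast

lemma smat_carrier: "X \<in> smat m n \<Longrightarrow> X i j \<in> gcarrier"
  using smat_entry[of X m n i j] by (simp split: if_splits)

lemma smat_zero_on_infinite: "X \<in> smat m n \<Longrightarrow> gzero_on_infinite (X i j)"
  using smat_carrier gcarrier_zero_on_infinite by blast

lemma smat_outside: "X \<in> smat m n \<Longrightarrow> \<not> (i < m+2*n \<and> j < m+2*n) \<Longrightarrow> X i j = gzero"
  using smat_entry[of X m n i j] by simp

lemma smatI:
  "(\<And>i j. X i j \<in> gcarrier) \<Longrightarrow> (\<And>i j. \<not> (i < m+2*n \<and> j < m+2*n) \<Longrightarrow> X i j = gzero)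
   \<Longrightarrow> X \<in> smat m n"
  unfolding smat_def by auto

lemma Emat_smat: "X \<in> Emat m n \<Longrightarrow> X \<in> smat m n"
  by (simp add: Emat_def)

lemma Emat_homog: "X \<in> Emat m n \<Longrightarrow> ghomog (spar m i \<noteq> spar m j) (X i j)"
  unfolding Emat_def by (cases "i < m+2*n \<and> j < m+2*n") (auto simp: smat_outside)

lemma EmatI: "X \<in> smat m n \<Longrightarrow> (\<And>i j. ghomog (spar m i \<noteq> spar m j) (X i j)) \<Longrightarrow> X \<in> Emat m n"
  unfolding Emat_def by auto

lemma matmul_smat:
  assumes "X \<in> smat m n" "Y \<in> smat m n" shows "matmul m n X Y \<in> smat m n"
proof (rule smatI)
  show "matmul m n X Y i j \<in> gcarrier" for i j
    unfolding matmul_def using assms by (simp add: gcarrier_gsum gcarrier_gmul smat_carrier)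
  show "matmul m n X Y i j = gzero" if "\<not> (i < m+2*n \<and> j < m+2*n)" for i j
    unfolding matmul_def by (rule gsum_gzero) (use that assms in \<open>auto simp: smat_outside\<close>)
qed

lemma matmul_Emat:
  assumes "X \<in> Emat m n" "Y \<in> Emat m n" shows "matmul m n X Y \<in> Emat m n"
proof (rule EmatI)
  show "matmul m n X Y \<in> smat m n" using assms by (simp add: Emat_smat matmul_smat)
  show "ghomog (spar m i \<noteq> spar m j) (matmul m n X Y i j)" for i j
    unfolding matmul_def
  proof (rule ghomog_gsum)
    fix k
    have "ghomog ((spar m i \<noteq> spar m k) \<noteq> (spar m k \<noteq> spar m j)) (gmul (X i k) (Y k j))"
      by (rule ghomog_gmul) (use assms Emat_homog in auto)
    moreover have "((spar m i \<noteq> spar m k) \<noteq> (spar m k \<noteq> spar m j)) = (spar m i \<noteq> spar m j)"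
      by auto
    ultimately show "ghomog (spar m i \<noteq> spar m j) (gmul (X i k) (Y k j))" by simp
  qed
qed

lemma matmul_assoc: "matmul m n (matmul m n X Y) Z = matmul m n X (matmul m n Y Z)"
  unfolding matmul_def by (rule ext, rule ext, rule gsum_gmul_gsum)

lemma matvec_matmul: "matvec m n (matmul m n X Y) v = matvec m n X (matvec m n Y v)"
  unfolding matmul_def matvec_def by (rule ext, rule gsum_gmul_gsum)

lemma midm_Emat: "midm m n \<in> Emat m n"
  by (rule EmatI, rule smatI) (auto simp: midm_def)

lemma matmul_midm_left:
  assumes "X \<in> smat m n" shows "matmul m n (midm m n) X = X"
proof (rule ext, rule ext)
  fix i j show "matmul m n (midm m n) X i j = X i j"
  proof (cases "i < m+2*n")
    case True
    have "matmul m n (midm m n) X i j = gmul (midm m n i i) (X i j)"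
      unfolding matmul_def by (rule gsum_single) (use True in \<open>auto simp: midm_def\<close>)
    thus ?thesis using True by (simp add: midm_def gmul_gone_left smat_zero_on_infinite[OF assms])
  next
    case False
    then show ?thesis
      unfolding matmul_def by (simp add: gsum_gzero midm_def smat_outside[OF assms])
  qed
qed

lemma matmul_midm_right:
  assumes "X \<in> smat m n" shows "matmul m n X (midm m n) = X"
proof (rule ext, rule ext)
  fix i j show "matmul m n X (midm m n) i j = X i j"
  proof (cases "j < m+2*n")
    case True
    have "matmul m n X (midm m n) i j = gmul (X i j) (midm m n j j)"
      unfolding matmul_def by (rule gsum_single) (use True in \<open>auto simp: midm_def\<close>)
    thus ?thesis using True by (simp add: midm_def gmul_gone_right smat_zero_on_infinite[OF assms])
  next
    case False
    then show ?thesis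
      unfolding matmul_def by (simp add: gsum_gzero midm_def smat_outside[OF assms])
  qed
qed

lemma matvec_basisvec:
  assumes "X \<in> smat m n" "j < m+2*n" shows "matvec m n X (basisvec j) = (\<lambda>k. X k j)"
proof (rule ext)
  fix k
  have "matvec m n X (basisvec j) k = gmul (X k j) (basisvec j j)"
    unfolding matvec_def by (rule gsum_single) (use assms in \<open>auto simp: basisvec_def\<close>)
  thus "matvec m n X (basisvec j) k = X k j"
    by (simp add: basisvec_def gmul_gone_right smat_zero_on_infinite[OF assms(1)])
qed

lemma map_matvec_basisvec:
  assumes "X \<in> smat m n" "set K \<subseteq> {..<m+2*n}"
  shows "map (\<lambda>j. matvec m n X (basisvec j)) K = map (\<lambda>k i. X i k) K"
  using assms by (auto simp: matvec_basisvec)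

lemma matmul_inverse_unique:
  assumes "g \<in> smat m n" "h \<in> smat m n" "h' \<in> smat m n"
    and "matmul m n g h = midm m n" "matmul m n h' g = midm m n"
  shows "h = h'"
proof -
  have "h' = matmul m n h' (matmul m n g h)" using assms by (simp add: matmul_midm_right)
  also have "\<dots> = matmul m n (matmul m n h' g) h" by (simp add: matmul_assoc)
  also have "\<dots> = h" using assms by (simp add: matmul_midm_left)
  finally show ?thesis by simp
qed

lemma GLsI:
  assumes "g \<in> Emat m n" "h \<in> Emat m n" "matmul m n g h = midm m n" "matmul m n h g = midm m n"
  shows "g \<in> GLs m n"
  using assms unfolding GLs_def by blast

lemma GLs_Emat: "g \<in> GLs m n \<Longrightarrow> g \<in> Emat m n"
  by (simp add: GLs_def)

lemma minv_eq:
  assumes "g \<in> Emat m n" "h \<in> Emat m n" "matmul m n g h = midm m n" "matmul m n h g = midm m n"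
  shows "minv m n g = h"
  unfolding minv_def
proof (rule the_equality)
  show "h \<in> Emat m n \<and> matmul m n g h = midm m n \<and> matmul m n h g = midm m n" using assms by simp
  fix h' assume "h' \<in> Emat m n \<and> matmul m n g h' = midm m n \<and> matmul m n h' g = midm m n"
  thus "h' = h" using matmul_inverse_unique[of g m n h' h] assms by (auto simp: Emat_smat)
qed

lemma minv:
  assumes "g \<in> GLs m n"
  shows "minv m n g \<in> Emat m n" "matmul m n g (minv m n g) = midm m n"
    "matmul m n (minv m n g) g = midm m n"
proof -
  obtain h where "h \<in> Emat m n" "matmul m n g h = midm m n" "matmul m n h g = midm m n"
    using assms unfolding GLs_def by auto
  moreover from this have "minv m n g = h" using assms by (intro minv_eq) (auto dest: GLs_Emat)
  ultimately show "minv m n g \<in> Emat m n" "matmul m n g (minv m n g) = midm m n"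
    "matmul m n (minv m n g) g = midm m n" by auto
qed

lemma minv_GLs:
  assumes "g \<in> GLs m n" shows "minv m n g \<in> GLs m n" "minv m n (minv m n g) = g"
  using minv[OF assms] GLs_Emat[OF assms] by (auto intro: GLsI minv_eq)

lemma GLs_matmul:
  assumes "g \<in> GLs m n" "h \<in> GLs m n" shows "matmul m n g h \<in> GLs m n"
proof (rule GLsI)
  let ?inv = "matmul m n (minv m n h) (minv m n g)"
  note g = minv[OF assms(1)] GLs_Emat[OF assms(1)] and h = minv[OF assms(2)] GLs_Emat[OF assms(2)]
  show "matmul m n g h \<in> Emat m n" "?inv \<in> Emat m n" using g h by (simp_all add: matmul_Emat)
  have "matmul m n (matmul m n g h) ?inv = matmul m n g (matmul m n (matmul m n h (minv m n h)) (minv m n g))"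
    by (simp add: matmul_assoc)
  thus "matmul m n (matmul m n g h) ?inv = midm m n"
    using g h by (simp add: matmul_midm_left Emat_smat)
  have "matmul m n ?inv (matmul m n g h) = matmul m n (minv m n h) (matmul m n (matmul m n (minv m n g) g) h)"
    by (simp add: matmul_assoc)
  thus "matmul m n ?inv (matmul m n g h) = midm m n"
    using g h by (simp add: matmul_midm_left Emat_smat)
qed

lemma finite_tuples: "finite (tuples m n r)"
proof -
  have "tuples m n r = {xs. set xs \<subseteq> {..<m+2*n} \<and> length xs = r}" by (auto simp: tuples_def)
  thus ?thesis by (simp add: finite_lists_length_eq)
qed

lemma tuples_Suc: "tuples m n (Suc r) = (\<lambda>(k, K). k # K) ` ({..<m+2*n} \<times> tuples m n r)"
proof (rule Set.set_eqI)
  fix J show "J \<in> tuples m n (Suc r) \<longleftrightarrow> J \<in> (\<lambda>(k, K). k # K) ` ({..<m+2*n} \<times> tuples m n r)"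
    by (cases J) (auto simp: tuples_def image_iff)
qed

lemma gsum_tuples_Suc:
  "gsum f (tuples m n (Suc r)) = gsum (\<lambda>k. gsum (\<lambda>K. f (k # K)) (tuples m n r)) {..<m+2*n}"
proof -
  have "inj_on (\<lambda>(k, K). k # K) ({..<m+2*n} \<times> tuples m n r)" by (auto simp: inj_on_def)
  thus ?thesis unfolding tuples_Suc by (simp add: gsum_reindex gsum_cartesian)
qed

lemma tcoef_map_basisvec:
  "length J = length K \<Longrightarrow> tcoef m J (map basisvec K) = (if J = K then gone else gzero)"
proof (induction J arbitrary: K)
  case (Cons j J)
  then obtain k K' where "K = k # K'" "length J = length K'" by (cases K) auto
  with Cons.IH show ?case by (simp add: basisvec_def gmul_gone_left)
qed simp

lemma TVdual_carrier: "c \<in> TVdual m n r \<Longrightarrow> c J \<in> gcarrier"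
  unfolding TVdual_def by (metis (mono_tags, lifting) gcarrier_gzero mem_Collect_eq)

lemma TVdual_outside: "c \<in> TVdual m n r \<Longrightarrow> J \<notin> tuples m n r \<Longrightarrow> c J = gzero"
  unfolding TVdual_def by (metis (mono_tags, lifting) mem_Collect_eq)

lemma Leval_map_basisvec:
  assumes "c \<in> TVdual m n r" "K \<in> tuples m n r"
  shows "Leval m n r c (map basisvec K) = c K"
proof -
  have "Leval m n r c (map basisvec K) = gmul (c K) (tcoef m K (map basisvec K))"
    unfolding Leval_def
    by (rule gsum_single) (use assms finite_tuples in \<open>auto simp: tcoef_map_basisvec tuples_def\<close>)
  thus ?thesis
    by (simp add: tcoef_map_basisvec gmul_gone_right gcarrier_zero_on_infinite TVdual_carrier[OF assms(1)])
qed

lemma tcoef_columns_homog: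
  assumes "Y \<in> Emat m n"
  shows "ghomog (tpar m J \<noteq> tpar m K) (tcoef m J (map (\<lambda>k i. Y i k) K))"
proof (induction J arbitrary: K)
  case Nil then show ?case by (cases K) (auto simp: tpar_def)
next
  case (Cons j J)
  show ?case
  proof (cases K)
    case (Cons k K')
    have "ghomog ((spar m j \<noteq> spar m k) \<noteq> (tpar m J \<noteq> tpar m K'))
        (gmul (galpha (tpar m J) (Y j k)) (tcoef m J (map (\<lambda>k i. Y i k) K')))"
      by (rule ghomog_gmul[OF ghomog_galpha[OF Emat_homog[OF assms]] Cons.IH])
    moreover have "((spar m j \<noteq> spar m k) \<noteq> (tpar m J \<noteq> tpar m K')) = (tpar m (j # J) \<noteq> tpar m (k # K'))"
      by (simp add: tpar_def)
    ultimately show ?thesis unfolding Cons by simp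
  qed simp
qed

lemma tcoef_Cons_swap:
  assumes Y: "Y \<in> Emat m n"
  shows "gmul (gmul (galpha (tpar m J) (Y j k)) (galpha (tpar m J) w))
               (gmul (tcoef m J (map (\<lambda>k i. Y i k) K)) C)
       = gmul (gmul (galpha (tpar m J) (Y j k)) (tcoef m J (map (\<lambda>k i. Y i k) K)))
               (gmul (galpha (tpar m K) w) C)"
proof -
  let ?T = "tcoef m J (map (\<lambda>k i. Y i k) K)"
  have "gmul (galpha (tpar m J) w) ?T = gmul ?T (galpha (tpar m J \<noteq> tpar m K) (galpha (tpar m J) w))"
    by (rule gmul_commute_homog[OF tcoef_columns_homog[OF Y]])
  also have "galpha (tpar m J \<noteq> tpar m K) (galpha (tpar m J) w) = galpha (tpar m K) w"
    unfolding galpha_galpha by (rule arg_cong[where f = "\<lambda>p. galpha p w"]) argo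
  finally have "gmul (gmul (galpha (tpar m J) w) ?T) C = gmul (gmul ?T (galpha (tpar m K) w)) C"
    by simp
  then show ?thesis by (simp add: gmul_assoc)
qed

text \<open>\<open>\<rho>\<^sub>r(Y)\<close> in coordinates: its \<open>(J, K)\<close> entry is the coordinate \<open>J\<close> of the tensor product
  of the columns \<open>K\<close> of \<open>Y\<close>.\<close>

lemma tcoef_map_matvec:
  assumes Y: "Y \<in> Emat m n"
  shows "length ws = r \<Longrightarrow> J \<in> tuples m n r \<Longrightarrow> tcoef m J (map (matvec m n Y) ws) =
     gsum (\<lambda>K. gmul (tcoef m J (map (\<lambda>k i. Y i k) K)) (tcoef m K ws)) (tuples m n r)"
proof (induction ws arbitrary: J r)
  case Nil
  hence "r = 0" "J = []" by (auto simp: tuples_def)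
  moreover have "tuples m n 0 = {[]}" by (auto simp: tuples_def)
  ultimately show ?case by (simp add: gmul_gone_left)
next
  case (Cons w ws)
  obtain r' where r: "r = Suc r'" "length ws = r'" using Cons.prems by auto
  obtain j J' where J: "J = j # J'" "J' \<in> tuples m n r'"
    using Cons.prems r by (cases J) (auto simp: tuples_def)
  have "tcoef m J (map (matvec m n Y) (w # ws)) =
      gsum (\<lambda>k. gsum (\<lambda>K. gmul (gmul (galpha (tpar m J') (Y j k)) (galpha (tpar m J') (w k)))
         (gmul (tcoef m J' (map (\<lambda>k i. Y i k) K)) (tcoef m K ws))) (tuples m n r')) {..<m+2*n}"
    unfolding J(1)
    by (simp add: Cons.IH[OF r(2) J(2)] matvec_def galpha_gsum galpha_gmul gmul_gsum_left gmul_gsum_right) (rule gsum_swap)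
  also have "\<dots> = gsum (\<lambda>K. gmul (tcoef m J (map (\<lambda>k i. Y i k) K)) (tcoef m K (w # ws))) (tuples m n r)"
    unfolding r(1) gsum_tuples_Suc J(1) by (simp add: tcoef_Cons_swap[OF Y])
  finally show ?case .
qed

lemma Leval_map_matvec:
  assumes Y: "Y \<in> Emat m n" and len: "length ws = r"
  shows "Leval m n r c (map (matvec m n Y) ws) =
     gsum (\<lambda>K. gmul (Leval m n r c (map (\<lambda>k i. Y i k) K)) (tcoef m K ws)) (tuples m n r)"
  unfolding Leval_def gmul_gsum_left
  using tcoef_map_matvec[OF Y len]
  by (simp add: gmul_gsum_right gmul_assoc cong: gsum_cong) (rule gsum_swap)

section \<open>The map \<open>\<Psi>\<close>\<close>

fun tsign :: "nat \<Rightarrow> nat list \<Rightarrow> nat list \<Rightarrow> complex" where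
  "tsign m (k # K) (j # J) = (if tpar m K \<and> spar m k \<noteq> spar m j then -1 else 1) * tsign m K J"
| "tsign m _ _ = 1"

lemma tcoef_columns_monomial:
  assumes X: "X \<in> Emat m n"
  shows "length K = length J \<Longrightarrow>
    tcoef m K (map (\<lambda>j i. X i j) J) = gscale (tsign m K J) (gprod_list (map (\<lambda>(i, j). X i j) (zip K J)))"
proof (induction K arbitrary: J)
  case (Cons k K)
  then obtain j J' where J: "J = j # J'" "length K = length J'" by (cases J) auto
  have "galpha (tpar m K) (X k j) = (if tpar m K \<and> spar m k \<noteq> spar m j then gscale (-1) (X k j) else X k j)"
    by (rule galpha_homog[OF Emat_homog[OF X]])
  with Cons.IH[OF J(2)] show ?case
    unfolding J(1) by (simp add: gmul_gscale_left gmul_gscale_right gscale_gscale)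
qed simp

lemma finite_monoms: "finite (monoms m n r)"
proof -
  have "monoms m n r = {xs. set xs \<subseteq> {..<m+2*n} \<times> {..<m+2*n} \<and> length xs = r}"
    by (auto simp: monoms_def)
  thus ?thesis by (simp add: finite_lists_length_eq)
qed

lemma gsum_tuples_zip:
  assumes J: "J \<in> tuples m n r" and zero: "\<And>\<kappa>. map snd \<kappa> \<noteq> J \<Longrightarrow> f \<kappa> = gzero"
  shows "gsum (\<lambda>K. f (zip K J)) (tuples m n r) = gsum f (monoms m n r)"
proof -
  have len: "length K = length J" if "K \<in> tuples m n r" for K
    using that J by (simp add: tuples_def)
  have "inj_on (\<lambda>K. zip K J) (tuples m n r)"
    by (rule inj_onI) (metis len map_fst_zip)
  hence "gsum (\<lambda>K. f (zip K J)) (tuples m n r) = gsum f ((\<lambda>K. zip K J) ` tuples m n r)"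
    by (simp add: gsum_reindex)
  also have "\<dots> = gsum f (monoms m n r)"
  proof (rule gsum_mono_neutral[symmetric])
    show "(\<lambda>K. zip K J) ` tuples m n r \<subseteq> monoms m n r"
      using J by (auto simp: tuples_def monoms_def dest: set_zip_leftD set_zip_rightD)
    show "f \<kappa> = gzero" if \<kappa>: "\<kappa> \<in> monoms m n r - (\<lambda>K. zip K J) ` tuples m n r" for \<kappa>
    proof (rule zero)
      have "map fst \<kappa> \<in> tuples m n r" using \<kappa> by (auto simp: monoms_def tuples_def)
      with \<kappa> show "map snd \<kappa> \<noteq> J" by (metis DiffD2 image_eqI zip_map_fst_snd)
    qed
  qed (rule finite_monoms)
  finally show ?thesis .
qed

lemma Psi_Poly:
  assumes c: "c \<in> TVdual m n r" and J: "J \<in> tuples m n r"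
  shows "Psi m n r c J \<in> Defs.Poly m n r"
proof -
  define d where "d \<kappa> = (if map snd \<kappa> = J then gscale (tsign m (map fst \<kappa>) J) (c (map fst \<kappa>)) else gzero)"
    for \<kappa>
  have "Leval m n r c (map (\<lambda>j. matvec m n X (basisvec j)) J) =
     gsum (\<lambda>\<kappa>. gmul (d \<kappa>) (gprod_list (map (\<lambda>(i, j). X i j) \<kappa>))) (monoms m n r)"
    if X: "X \<in> Emat m n" for X
  proof -
    have "Leval m n r c (map (\<lambda>j. matvec m n X (basisvec j)) J) =
        gsum (\<lambda>K. gmul (c K) (tcoef m K (map (\<lambda>j i. X i j) J))) (tuples m n r)"
      unfolding Leval_def using J by (simp add: map_matvec_basisvec Emat_smat[OF X] tuples_def)
    also have "\<dots> = gsum (\<lambda>K. gmul (d (zip K J)) (gprod_list (map (\<lambda>(i, j). X i j) (zip K J))))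
        (tuples m n r)"
      using J by (intro gsum_cong)
        (simp add: tcoef_columns_monomial[OF X] d_def gmul_gscale_left gmul_gscale_right tuples_def)
    also have "\<dots> = gsum (\<lambda>\<kappa>. gmul (d \<kappa>) (gprod_list (map (\<lambda>(i, j). X i j) \<kappa>))) (monoms m n r)"
      by (rule gsum_tuples_zip[OF J]) (simp add: d_def)
    finally show ?thesis .
  qed
  moreover have "d \<kappa> \<in> gcarrier" for \<kappa>
    unfolding d_def by (simp add: gcarrier_gscale TVdual_carrier[OF c])
  ultimately show ?thesis
    unfolding Defs.Poly_def using J by (intro CollectI exI[of _ d]) (auto simp: Psi_def)
qed

lemma Psi_TP: "c \<in> TVdual m n r \<Longrightarrow> Psi m n r c \<in> TP m n r"
  unfolding TP_def using Psi_Poly by (auto simp: Psi_def)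

lemma Psi_Rhat:
  assumes c: "c \<in> TVdual m n r" and g: "g \<in> GLs m n"
  shows "Rhat m n r g (Psi m n r c) = Psi m n r c"
proof (rule ext, rule ext)
  fix J X
  show "Rhat m n r g (Psi m n r c) J X = Psi m n r c J X"
  proof (cases "J \<in> tuples m n r \<and> X \<in> Emat m n")
    case True
    hence J: "J \<in> tuples m n r" and X: "X \<in> Emat m n" by auto
    have XgE: "matmul m n X g \<in> Emat m n" by (rule matmul_Emat[OF X GLs_Emat[OF g]])
    define ws where "ws = map (\<lambda>j. matvec m n (minv m n g) (basisvec j)) J"
    have "Rhat m n r g (Psi m n r c) J X = Feval m n r (Psi m n r c) (matmul m n X g) ws"
      using J X by (simp add: Rhat_def ws_def)
    also have "\<dots> = gsum (\<lambda>K. gmul (Leval m n r c (map (\<lambda>k i. matmul m n X g i k) K)) (tcoef m K ws))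
        (tuples m n r)"
      unfolding Feval_def
      by (rule gsum_cong) (simp add: Psi_def XgE map_matvec_basisvec Emat_smat tuples_def)
    also have "\<dots> = Leval m n r c (map (matvec m n (matmul m n X g)) ws)"
      by (rule Leval_map_matvec[OF XgE, symmetric]) (use J in \<open>simp add: ws_def tuples_def\<close>)
    also have "map (matvec m n (matmul m n X g)) ws = map (\<lambda>j. matvec m n X (basisvec j)) J"
      using minv[OF g] X
      by (simp add: ws_def flip: matvec_matmul add: matmul_assoc matmul_midm_right Emat_smat)
    finally show ?thesis using J X by (simp add: Psi_def)
  qed (auto simp: Rhat_def Psi_def)
qed

lemma Psi_Lhat:
  assumes c: "c \<in> TVdual m n r" and g: "g \<in> GLs m n" and inv: "rho_dual m n r g c = c"
  shows "Lhat m n r g (Psi m n r c) = Psi m n r c"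
proof (rule ext, rule ext)
  fix J X
  show "Lhat m n r g (Psi m n r c) J X = Psi m n r c J X"
  proof (cases "J \<in> tuples m n r \<and> X \<in> Emat m n")
    case True
    hence J: "J \<in> tuples m n r" and X: "X \<in> Emat m n" by auto
    note h = minv(1)[OF g]
    define ws where "ws = map (\<lambda>j. matvec m n X (basisvec j)) J"
    have "Lhat m n r g (Psi m n r c) J X = Leval m n r c (map (matvec m n (minv m n g)) ws)"
      using J X h by (simp add: Lhat_def Psi_def matmul_Emat ws_def matvec_matmul comp_def)
    also have "\<dots> = gsum (\<lambda>K. gmul (Leval m n r c (map (\<lambda>k i. minv m n g i k) K)) (tcoef m K ws))
        (tuples m n r)"
      by (rule Leval_map_matvec[OF h]) (use J in \<open>simp add: ws_def tuples_def\<close>)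
    also have "\<dots> = gsum (\<lambda>K. gmul (c K) (tcoef m K ws)) (tuples m n r)"
    proof (rule gsum_cong)
      fix K assume K: "K \<in> tuples m n r"
      have "Leval m n r c (map (\<lambda>k i. minv m n g i k) K) = rho_dual m n r g c K"
        using K by (simp add: rho_dual_def map_matvec_basisvec Emat_smat[OF h] tuples_def)
      with inv show "gmul (Leval m n r c (map (\<lambda>k i. minv m n g i k) K)) (tcoef m K ws)
          = gmul (c K) (tcoef m K ws)" by simp
    qed
    finally show ?thesis using J X by (simp add: Psi_def Leval_def ws_def)
  qed (auto simp: Lhat_def Psi_def)
qed

lemma Psi_midm:
  assumes c: "c \<in> TVdual m n r" and J: "J \<in> tuples m n r"
  shows "Psi m n r c J (midm m n) = c J"
proof -
  have "matvec m n (midm m n) (basisvec j) = basisvec j" if "j < m+2*n" for j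
    using that by (simp add: matvec_basisvec Emat_smat[OF midm_Emat]) (auto simp: midm_def basisvec_def)
  with J have cols: "map (\<lambda>j. matvec m n (midm m n) (basisvec j)) J = map basisvec J"
    by (auto simp: tuples_def)
  have "Psi m n r c J (midm m n) = Leval m n r c (map (\<lambda>j. matvec m n (midm m n) (basisvec j)) J)"
    using J by (simp add: Psi_def midm_Emat)
  also have "\<dots> = c J"
    unfolding cols by (rule Leval_map_basisvec[OF c J])
  finally show ?thesis .
qed

lemma inj_on_Psi: "inj_on (Psi m n r) (TVdual m n r)"
proof (rule inj_onI, rule ext)
  fix c d J assume c: "c \<in> TVdual m n r" and d: "d \<in> TVdual m n r" and eq: "Psi m n r c = Psi m n r d"
  show "c J = d J"
  proof (cases "J \<in> tuples m n r")
    case True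
    thus ?thesis using Psi_midm[OF c True] Psi_midm[OF d True] eq by simp
  qed (simp add: TVdual_outside[OF c] TVdual_outside[OF d])
qed

lemma Psi_tv_add: "Psi m n r (tv_add c d) = tp_add (Psi m n r c) (Psi m n r d)"
  unfolding Psi_def tp_add_def Leval_def tv_add_def
  by (intro ext) (simp add: gmul_gadd_left gsum_gadd)

lemma Psi_tv_smul: "Psi m n r (tv_smul a c) = tp_smul a (Psi m n r c)"
  unfolding Psi_def tp_smul_def Leval_def tv_smul_def
  by (intro ext) (simp add: gmul_assoc gmul_gsum_right)

section \<open>Shifts of even matrices are generically invertible\<close>

definition cmatmul :: "nat \<Rightarrow> (nat \<Rightarrow> nat \<Rightarrow> complex) \<Rightarrow> (nat \<Rightarrow> nat \<Rightarrow> complex) \<Rightarrow> nat \<Rightarrow> nat \<Rightarrow> complex"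
  where "cmatmul N A B = (\<lambda>i j. \<Sum>k<N. A i k * B k j)"

definition cmatid :: "nat \<Rightarrow> nat \<Rightarrow> nat \<Rightarrow> complex" where
  "cmatid N = (\<lambda>i j. if i < N \<and> i = j then 1 else 0)"

definition cshift :: "nat \<Rightarrow> (nat \<Rightarrow> nat \<Rightarrow> complex) \<Rightarrow> complex \<Rightarrow> nat \<Rightarrow> nat \<Rightarrow> complex" where
  "cshift N C t = (\<lambda>i j. C i j + (if i < N \<and> i = j then t else 0))"

definition cinvertible :: "nat \<Rightarrow> (nat \<Rightarrow> nat \<Rightarrow> complex) \<Rightarrow> bool" where
  "cinvertible N C \<longleftrightarrow> (\<exists>D. (\<forall>i j. \<not> (i < N \<and> j < N) \<longrightarrow> D i j = 0) \<and>
     cmatmul N C D = cmatid N \<and> cmatmul N D C = cmatid N)"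

definition cmat_to_mat :: "nat \<Rightarrow> (nat \<Rightarrow> nat \<Rightarrow> complex) \<Rightarrow> complex mat" where
  "cmat_to_mat N A = mat N N (\<lambda>(i, j). A i j)"

lemma cmat_to_mat_mult_left:
  "B \<in> carrier_mat N N \<Longrightarrow> i < N \<Longrightarrow> j < N \<Longrightarrow> (cmat_to_mat N A * B) $$ (i, j) = (\<Sum>k<N. A i k * B $$ (k, j))"
  by (simp add: cmat_to_mat_def scalar_prod_def atLeast0LessThan row_def col_def)

lemma cmat_to_mat_mult_right:
  "B \<in> carrier_mat N N \<Longrightarrow> i < N \<Longrightarrow> j < N \<Longrightarrow> (B * cmat_to_mat N A) $$ (i, j) = (\<Sum>k<N. B $$ (i, k) * A k j)"
  by (simp add: cmat_to_mat_def scalar_prod_def atLeast0LessThan row_def col_def)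

lemma cinvertible_of_det:
  assumes C0: "\<And>i j. \<not> (i < N \<and> j < N) \<Longrightarrow> C i j = 0" and det: "det (cmat_to_mat N C) \<noteq> 0"
  shows "cinvertible N C"
proof -
  define M where "M = cmat_to_mat N C"
  have M: "M \<in> carrier_mat N N" by (simp add: M_def cmat_to_mat_def)
  define W where "W = (1 / det M) \<cdot>\<^sub>m adj_mat M"
  have W: "W \<in> carrier_mat N N" using adj_mat(1)[OF M] by (simp add: W_def)
  have scale: "(1 / det M) \<cdot>\<^sub>m (det M \<cdot>\<^sub>m 1\<^sub>m N) = 1\<^sub>m N"
    using det by (intro eq_matI) (auto simp: M_def)
  have MW: "M * W = 1\<^sub>m N"
    unfolding W_def using adj_mat(2)[OF M] scale by (simp add: mult_smult_distrib[OF M adj_mat(1)[OF M]])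
  have WM: "W * M = 1\<^sub>m N"
    unfolding W_def using adj_mat(3)[OF M] scale by (simp add: mult_smult_assoc_mat[OF adj_mat(1)[OF M] M])
  define D where "D = (\<lambda>i j. if i < N \<and> j < N then W $$ (i, j) else 0)"
  have "cmatmul N C D = cmatid N"
  proof (intro ext)
    fix i j show "cmatmul N C D i j = cmatid N i j"
    proof (cases "i < N \<and> j < N")
      case True
      hence "cmatmul N C D i j = (M * W) $$ (i, j)"
        unfolding M_def by (simp add: cmat_to_mat_mult_left[OF W] cmatmul_def D_def)
      with True MW show ?thesis by (simp add: cmatid_def)
    qed (auto simp: cmatmul_def D_def cmatid_def C0)
  qed
  moreover have "cmatmul N D C = cmatid N"
  proof (intro ext)
    fix i j show "cmatmul N D C i j = cmatid N i j"
    proof (cases "i < N \<and> j < N")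
      case True
      hence "cmatmul N D C i j = (W * M) $$ (i, j)"
        unfolding M_def by (simp add: cmat_to_mat_mult_right[OF W] cmatmul_def D_def)
      with True WM show ?thesis by (simp add: cmatid_def)
    qed (auto simp: cmatmul_def D_def cmatid_def C0)
  qed
  ultimately show ?thesis unfolding cinvertible_def by (intro exI[of _ D]) (auto simp: D_def)
qed

text \<open>The exceptional \<open>t\<close> are the roots of the characteristic polynomial of \<open>-C\<close>.\<close>

lemma finite_not_cinvertible_cshift:
  assumes C0: "\<And>i j. \<not> (i < N \<and> j < N) \<Longrightarrow> C i j = 0"
  shows "finite {t. \<not> cinvertible N (cshift N C t)}"
proof -
  define A where "A = cmat_to_mat N (\<lambda>i j. - C i j)"
  have A: "A \<in> carrier_mat N N" by (simp add: A_def cmat_to_mat_def)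
  have "char_poly A \<noteq> 0" using degree_monic_char_poly[OF A] by auto
  hence "finite {t. poly (char_poly A) t = 0}" by (rule poly_roots_finite)
  moreover have "{t. \<not> cinvertible N (cshift N C t)} \<subseteq> {t. poly (char_poly A) t = 0}"
  proof (intro subsetI CollectI, rule ccontr)
    fix t assume t: "poly (char_poly A) t \<noteq> 0" and "t \<in> {t. \<not> cinvertible N (cshift N C t)}"
    have "cmat_to_mat N (cshift N C t) = - char_matrix A t"
      by (rule eq_matI) (use A in \<open>auto simp: A_def cshift_def cmat_to_mat_def char_matrix_def\<close>)
    hence "det (cmat_to_mat N (cshift N C t)) \<noteq> 0"
      using t char_poly_matrix[OF A, of t] by simp
    hence "cinvertible N (cshift N C t)"
      by (rule cinvertible_of_det[rotated]) (auto simp: cshift_def C0)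
    thus False using \<open>t \<in> _\<close> by simp
  qed
  ultimately show ?thesis by (rule finite_subset[rotated])
qed

definition mconst :: "(nat \<Rightarrow> nat \<Rightarrow> complex) \<Rightarrow> Defs.mat" where
  "mconst C = (\<lambda>i j. gscale (C i j) gone)"

definition madd :: "Defs.mat \<Rightarrow> Defs.mat \<Rightarrow> Defs.mat" where
  "madd A B = (\<lambda>i j. gadd (A i j) (B i j))"

definition even_part :: "nat \<Rightarrow> (nat \<Rightarrow> nat \<Rightarrow> complex) \<Rightarrow> nat \<Rightarrow> nat \<Rightarrow> complex" where
  "even_part m D = (\<lambda>i j. if spar m i = spar m j then D i j else 0)"

lemma matmul_mconst: "matmul m n (mconst A) (mconst B) = mconst (cmatmul (m+2*n) A B)"
proof -
  have "gmul (gscale a gone) (gscale b gone) = gscale (a * b) gone" for a b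
    by (simp add: gmul_gscale_left gmul_gscale_right gmul_gone_left gscale_gscale mult.commute)
  moreover have "gsum (\<lambda>k. gscale (f k) gone) A = gscale (\<Sum>k\<in>A. f k) gone" for f and A :: "nat set"
    by (rule ext) (simp add: gsum_def gscale_def sum_distrib_right)
  ultimately show ?thesis unfolding matmul_def mconst_def cmatmul_def by simp
qed

lemma mconst_cmatid: "mconst (cmatid (m+2*n)) = midm m n"
  unfolding mconst_def cmatid_def midm_def by (intro ext) (simp add: gscale_def gzero_def)

lemma mconst_Emat:
  assumes "\<And>i j. \<not> (i < m+2*n \<and> j < m+2*n) \<Longrightarrow> C i j = 0"
    and "\<And>i j. spar m i \<noteq> spar m j \<Longrightarrow> C i j = 0"
  shows "mconst C \<in> Emat m n"
proof (rule EmatI)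
  show "mconst C \<in> smat m n"
    by (rule smatI) (simp_all add: mconst_def gcarrier_gscale assms(1))
  show "ghomog (spar m i \<noteq> spar m j) (mconst C i j)" for i j
    by (cases "spar m i \<noteq> spar m j") (simp_all add: mconst_def assms(2) ghomog_gscale)
qed

lemma madd_Emat:
  assumes A: "A \<in> Emat m n" and B: "B \<in> Emat m n" shows "madd A B \<in> Emat m n"
proof (rule EmatI)
  show "madd A B \<in> smat m n"
    using Emat_smat[OF A] Emat_smat[OF B]
    by (intro smatI) (simp_all add: madd_def gcarrier_gadd smat_carrier smat_outside)
  show "ghomog (spar m i \<noteq> spar m j) (madd A B i j)" for i j
    unfolding madd_def by (rule ghomog_gadd[OF Emat_homog[OF A] Emat_homog[OF B]])
qed

lemma matmul_madd_left: "matmul m n (madd A B) C = madd (matmul m n A C) (matmul m n B C)"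
  unfolding matmul_def madd_def by (simp add: gmul_gadd_left gsum_gadd)

lemma matmul_madd_right: "matmul m n C (madd A B) = madd (matmul m n C A) (matmul m n C B)"
  unfolding matmul_def madd_def by (simp add: gmul_gadd_right gsum_gadd)

text \<open>An even matrix is block diagonal with respect to the parity of the indices, so the
  off-diagonal blocks of any inverse can be dropped.\<close>

lemma cmatmul_even_part:
  assumes even: "\<And>i k. spar m i \<noteq> spar m k \<Longrightarrow> B i k = 0"
  shows "cmatmul N B D = cmatid N \<Longrightarrow> cmatmul N B (even_part m D) = cmatid N"
    and "cmatmul N D B = cmatid N \<Longrightarrow> cmatmul N (even_part m D) B = cmatid N"
proof -
  have same: "cmatmul N B (even_part m D) i j = cmatmul N B D i j"
    "cmatmul N (even_part m D) B i j = cmatmul N D B i j" if "spar m i = spar m j" for i j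
    unfolding cmatmul_def using that even by (auto simp: even_part_def intro!: sum.cong)
  have cross: "cmatmul N B (even_part m D) i j = cmatid N i j"
    "cmatmul N (even_part m D) B i j = cmatid N i j" if "spar m i \<noteq> spar m j" for i j
    unfolding cmatmul_def cmatid_def using that even by (auto simp: even_part_def intro!: sum.neutral)
  show "cmatmul N B D = cmatid N \<Longrightarrow> cmatmul N B (even_part m D) = cmatid N"
    using same(1) cross(1) by (metis ext)
  show "cmatmul N D B = cmatid N \<Longrightarrow> cmatmul N (even_part m D) B = cmatid N"
    using same(2) cross(2) by (metis ext)
qed

lemma mconst_inverse:
  assumes out: "\<And>i j. \<not> (i < m+2*n \<and> j < m+2*n) \<Longrightarrow> C i j = 0"
    and even: "\<And>i j. spar m i \<noteq> spar m j \<Longrightarrow> C i j = 0"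
    and inv: "cinvertible (m+2*n) C"
  obtains D where "mconst D \<in> Emat m n" "matmul m n (mconst C) (mconst D) = midm m n"
    "matmul m n (mconst D) (mconst C) = midm m n"
proof -
  obtain D where D0: "\<And>i j. \<not> (i < m+2*n \<and> j < m+2*n) \<Longrightarrow> D i j = 0"
    and CD: "cmatmul (m+2*n) C D = cmatid (m+2*n)" and DC: "cmatmul (m+2*n) D C = cmatid (m+2*n)"
    using inv unfolding cinvertible_def by blast
  show ?thesis
  proof
    show "mconst (even_part m D) \<in> Emat m n"
      by (rule mconst_Emat) (auto simp: even_part_def D0)
    show "matmul m n (mconst C) (mconst (even_part m D)) = midm m n"
      "matmul m n (mconst (even_part m D)) (mconst C) = midm m n"
      using cmatmul_even_part[OF even] CD DC by (simp_all add: matmul_mconst mconst_cmatid)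
  qed
qed

definition glevel :: "nat set \<Rightarrow> nat \<Rightarrow> grass \<Rightarrow> bool" where
  "glevel G k a \<longleftrightarrow> (\<forall>U. a U \<noteq> 0 \<longrightarrow> U \<subseteq> G \<and> k \<le> card U)"

definition mlevel :: "nat set \<Rightarrow> nat \<Rightarrow> Defs.mat \<Rightarrow> bool" where
  "mlevel G k M \<longleftrightarrow> (\<forall>i j. glevel G k (M i j))"

lemma glevel_gmul:
  assumes "finite G" "glevel G k a" "glevel G l b" shows "glevel G (k + l) (gmul a b)"
  unfolding glevel_def
proof (intro allI impI)
  fix U assume "gmul a b U \<noteq> 0"
  then obtain S where S: "finite U" "S \<subseteq> U" "a S \<noteq> 0" "b (U - S) \<noteq> 0"
    using gmul_nonzero_split by blast
  have "S \<subseteq> G" "k \<le> card S" using S(3) assms(2) unfolding glevel_def by blast+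
  moreover have "U - S \<subseteq> G" "l \<le> card (U - S)" using S(4) assms(3) unfolding glevel_def by blast+
  moreover have "card U = card S + card (U - S)" by (rule card_Diff_split[OF S(1,2)])
  ultimately show "U \<subseteq> G \<and> k + l \<le> card U" by auto
qed

lemma glevel_gsum: "(\<And>x. x \<in> A \<Longrightarrow> glevel G k (f x)) \<Longrightarrow> glevel G k (gsum f A)"
  unfolding glevel_def gsum_def by (meson sum.neutral)

lemma glevel_above_card:
  assumes "finite G" "glevel G k a" "card G < k" shows "a = gzero"
proof (rule ext, rule ccontr)
  fix U assume "a U \<noteq> gzero U"
  hence "U \<subseteq> G" "k \<le> card U" using assms(2) unfolding glevel_def gzero_def by blast+
  with assms show False by (meson card_mono leD order_trans)
qed

lemma mlevel_matmul: "finite G \<Longrightarrow> mlevel G k A \<Longrightarrow> mlevel G l B \<Longrightarrow> mlevel G (k + l) (matmul m n A B)"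
  unfolding mlevel_def matmul_def by (intro allI glevel_gsum glevel_gmul) auto

lemma mlevel_mconst: "mlevel G 0 (mconst C)"
  by (simp add: mlevel_def glevel_def mconst_def gscale_def gone_def)

definition msoul :: "Defs.mat \<Rightarrow> Defs.mat" where
  "msoul X = (\<lambda>i j S. if S = {} then 0 else X i j S)"

definition mbody :: "Defs.mat \<Rightarrow> nat \<Rightarrow> nat \<Rightarrow> complex" where
  "mbody X = (\<lambda>i j. X i j {})"

lemma msoul_Emat:
  assumes X: "X \<in> Emat m n" shows "msoul X \<in> Emat m n"
proof (rule EmatI)
  show "msoul X \<in> smat m n"
  proof (rule smatI)
    show "msoul X i j \<in> gcarrier" for i j
      by (rule gcarrier_mono[OF smat_carrier[OF Emat_smat[OF X]]]) (simp add: msoul_def split: if_splits)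
    show "msoul X i j = gzero" if "\<not> (i < m + 2 * n \<and> j < m + 2 * n)" for i j
      using smat_outside[OF Emat_smat[OF X] that] by (simp add: msoul_def gzero_def fun_eq_iff)
  qed
  show "ghomog (spar m i \<noteq> spar m j) (msoul X i j)" for i j
    using Emat_homog[OF X, of i j] by (simp add: ghomog_def msoul_def)
qed

lemma smat_finite_generators:
  assumes X: "X \<in> smat m n" obtains G where "finite G" "mlevel G 0 X"
proof
  let ?G = "\<Union>i<m+2*n. \<Union>j<m+2*n. \<Union>{S. X i j S \<noteq> 0}"
  show "finite ?G" using smat_carrier[OF X] by (auto simp: gcarrier_def)
  show "mlevel ?G 0 X"
    unfolding mlevel_def glevel_def
  proof (intro allI impI conjI)
    fix i j U assume nz: "X i j U \<noteq> 0"
    have "i < m+2*n \<and> j < m+2*n"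
    proof (rule ccontr)
      assume "\<not> (i < m+2*n \<and> j < m+2*n)"
      with nz show False by (simp add: smat_outside[OF X] gzero_def)
    qed
    with nz show "U \<subseteq> ?G" by blast
  qed simp
qed

lemma mlevel_msoul:
  assumes "finite G" "mlevel G 0 X" shows "mlevel G 1 (msoul X)"
  unfolding mlevel_def glevel_def
proof (intro allI impI)
  fix i j U assume "msoul X i j U \<noteq> 0"
  hence "U \<noteq> {}" "U \<subseteq> G" using assms(2) by (auto simp: msoul_def mlevel_def glevel_def split: if_splits)
  with assms(1) show "U \<subseteq> G \<and> 1 \<le> card U"
    by (simp add: Suc_le_eq card_gt_0_iff finite_subset)
qed

definition mscale :: "complex \<Rightarrow> Defs.mat \<Rightarrow> Defs.mat" where
  "mscale c A = (\<lambda>i j. gscale c (A i j))"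

definition mzero :: Defs.mat where
  "mzero = (\<lambda>i j. gzero)"

primrec mpow :: "nat \<Rightarrow> nat \<Rightarrow> Defs.mat \<Rightarrow> nat \<Rightarrow> Defs.mat" where
  "mpow m n Q 0 = midm m n"
| "mpow m n Q (Suc k) = matmul m n Q (mpow m n Q k)"

primrec neumann_sum :: "nat \<Rightarrow> nat \<Rightarrow> Defs.mat \<Rightarrow> nat \<Rightarrow> Defs.mat" where
  "neumann_sum m n Q 0 = mzero"
| "neumann_sum m n Q (Suc K) = madd (neumann_sum m n Q K) (mscale ((-1)^K) (mpow m n Q K))"

lemma mscale_Emat:
  assumes A: "A \<in> Emat m n" shows "mscale c A \<in> Emat m n"
proof (rule EmatI)
  show "mscale c A \<in> smat m n"
    using Emat_smat[OF A] by (intro smatI) (simp_all add: mscale_def gcarrier_gscale smat_carrier smat_outside)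
  show "ghomog (spar m i \<noteq> spar m j) (mscale c A i j)" for i j
    unfolding mscale_def by (rule ghomog_gscale[OF Emat_homog[OF A]])
qed

lemma mzero_Emat: "mzero \<in> Emat m n"
  by (intro EmatI smatI) (auto simp: mzero_def)

lemma matmul_mscale_left: "matmul m n (mscale c A) B = mscale c (matmul m n A B)"
  unfolding matmul_def mscale_def by (simp add: gmul_gscale_left gsum_gscale)

lemma matmul_mscale_right: "matmul m n B (mscale c A) = mscale c (matmul m n B A)"
  unfolding matmul_def mscale_def by (simp add: gmul_gscale_right gsum_gscale)

lemma matmul_mzero: "matmul m n mzero A = mzero" "matmul m n A mzero = mzero"
  unfolding matmul_def mzero_def by (simp_all add: gsum_gzero)

lemma mpow_Emat: "Q \<in> Emat m n \<Longrightarrow> mpow m n Q k \<in> Emat m n"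
  by (induction k) (simp_all add: midm_Emat matmul_Emat)

lemma mpow_Suc_right:
  assumes "Q \<in> smat m n" shows "matmul m n (mpow m n Q k) Q = mpow m n Q (Suc k)"
proof (induction k)
  case 0 then show ?case using assms by (simp add: matmul_midm_left matmul_midm_right)
next
  case (Suc k) then show ?case by (simp add: matmul_assoc)
qed

lemma mlevel_mpow: "finite G \<Longrightarrow> mlevel G 1 Q \<Longrightarrow> mlevel G k (mpow m n Q k)"
proof (induction k)
  case 0 then show ?case by (simp add: mlevel_def glevel_def midm_def gone_def gzero_def)
next
  case (Suc k) then show ?case using mlevel_matmul[of G 1 Q k "mpow m n Q k" m n] by simp
qed

lemma neumann_sum_Emat: "Q \<in> Emat m n \<Longrightarrow> neumann_sum m n Q K \<in> Emat m n"
  by (induction K) (simp_all add: mzero_Emat madd_Emat mscale_Emat mpow_Emat)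

lemma neumann_sum_telescope:
  assumes Q: "Q \<in> smat m n"
  shows "matmul m n (neumann_sum m n Q K) (madd (midm m n) Q)
           = madd (midm m n) (mscale (- ((-1)^K)) (mpow m n Q K))"
    and "matmul m n (madd (midm m n) Q) (neumann_sum m n Q K)
           = madd (midm m n) (mscale (- ((-1)^K)) (mpow m n Q K))"
proof -
  have Qk: "mpow m n Q k \<in> smat m n" for k
    using Q by (induction k) (simp_all add: Emat_smat[OF midm_Emat] matmul_smat)
  have step: "madd (madd (midm m n) (mscale (- ((-1)^K)) P)) (mscale ((-1)^K) (madd P P'))
            = madd (midm m n) (mscale (- ((-1)^Suc K)) P')" for K P P'
    by (intro ext) (simp add: madd_def mscale_def gadd_def gscale_def algebra_simps)
  have base: "madd (midm m n) (mscale (- 1) (midm m n)) = mzero"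
    by (intro ext) (simp add: madd_def mscale_def mzero_def gadd_def gscale_def gzero_def)
  show "matmul m n (neumann_sum m n Q K) (madd (midm m n) Q)
           = madd (midm m n) (mscale (- ((-1)^K)) (mpow m n Q K))"
  proof (induction K)
    case (Suc K)
    have "matmul m n (mpow m n Q K) (madd (midm m n) Q) = madd (mpow m n Q K) (mpow m n Q (Suc K))"
      by (simp only: matmul_madd_right matmul_midm_right[OF Qk] mpow_Suc_right[OF Q])
    with Suc show ?case by (simp add: matmul_madd_left matmul_mscale_left step)
  qed (simp add: matmul_mzero base)
  show "matmul m n (madd (midm m n) Q) (neumann_sum m n Q K)
           = madd (midm m n) (mscale (- ((-1)^K)) (mpow m n Q K))"
  proof (induction K)
    case (Suc K)
    have "matmul m n (madd (midm m n) Q) (mpow m n Q K) = madd (mpow m n Q K) (mpow m n Q (Suc K))"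
      by (simp only: matmul_madd_left matmul_midm_left[OF Qk] mpow.simps)
    with Suc show ?case by (simp add: matmul_madd_right matmul_mscale_right step)
  qed (simp add: matmul_mzero base)
qed

lemma unipotent_GLs:
  assumes Q: "Q \<in> Emat m n" and G: "finite G" "mlevel G 1 Q"
  shows "madd (midm m n) Q \<in> GLs m n"
proof -
  let ?K = "Suc (card G)"
  have "mpow m n Q ?K = mzero"
    using glevel_above_card[OF G(1)] mlevel_mpow[OF G] unfolding mlevel_def mzero_def by blast
  hence "madd (midm m n) (mscale c (mpow m n Q ?K)) = midm m n" for c
    by (intro ext) (simp add: madd_def mscale_def mzero_def)
  with neumann_sum_telescope[OF Emat_smat[OF Q], of ?K]
  have "matmul m n (neumann_sum m n Q ?K) (madd (midm m n) Q) = midm m n"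
    "matmul m n (madd (midm m n) Q) (neumann_sum m n Q ?K) = midm m n"
    by (simp_all only:)
  then show ?thesis
    using neumann_sum_Emat[OF Q] madd_Emat[OF midm_Emat Q] by (intro GLsI)
qed

definition mshift :: "nat \<Rightarrow> nat \<Rightarrow> Defs.mat \<Rightarrow> complex \<Rightarrow> Defs.mat" where
  "mshift m n X t = (\<lambda>i j. gadd (X i j) (gscale t (midm m n i j)))"

lemma mshift_Emat: "X \<in> Emat m n \<Longrightarrow> mshift m n X t \<in> Emat m n"
  using madd_Emat[OF _ mscale_Emat[OF midm_Emat]] by (simp add: mshift_def madd_def mscale_def)

lemma mshift_0: "mshift m n X 0 = X"
  by (simp add: mshift_def)

lemma mbody_outside: "X \<in> smat m n \<Longrightarrow> \<not> (i < m+2*n \<and> j < m+2*n) \<Longrightarrow> mbody X i j = 0"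
  by (simp add: smat_outside mbody_def gzero_def)

text \<open>\<open>X + t = B (1 + B\<^sup>-\<^sup>1 X\<^sub>s)\<close> with \<open>B\<close> the body of \<open>X + t\<close> and \<open>X\<^sub>s\<close> the soul of \<open>X\<close>;
  the second factor is unipotent.\<close>

lemma mshift_GLs:
  assumes X: "X \<in> Emat m n" and inv: "cinvertible (m+2*n) (cshift (m+2*n) (mbody X) t)"
  shows "mshift m n X t \<in> GLs m n"
proof -
  let ?B = "cshift (m+2*n) (mbody X) t"
  have B_even: "?B i j = 0" if "spar m i \<noteq> spar m j" for i j
    using Emat_homog[OF X, of i j] that by (auto simp: cshift_def mbody_def ghomog_def)
  have B_out: "?B i j = 0" if "\<not> (i < m+2*n \<and> j < m+2*n)" for i j
    using mbody_outside[OF Emat_smat[OF X] that] that by (auto simp: cshift_def)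
  obtain D where D: "mconst D \<in> Emat m n" "matmul m n (mconst ?B) (mconst D) = midm m n"
    "matmul m n (mconst D) (mconst ?B) = midm m n"
    using mconst_inverse[OF B_out B_even inv] by blast
  have B: "mconst ?B \<in> GLs m n"
    using D by (intro GLsI mconst_Emat B_out B_even)
  obtain G where G: "finite G" "mlevel G 1 (msoul X)"
    using smat_finite_generators[OF Emat_smat[OF X]] mlevel_msoul by metis
  let ?Q = "matmul m n (mconst D) (msoul X)"
  have "mshift m n X t = madd (mconst ?B) (msoul X)"
    by (intro ext) (simp add: mshift_def madd_def mconst_def msoul_def cshift_def mbody_def
        midm_def gadd_def gscale_def gone_def gzero_def)
  also have "\<dots> = matmul m n (mconst ?B) (madd (midm m n) ?Q)"
    using D(2) Emat_smat[OF GLs_Emat[OF B]] Emat_smat[OF msoul_Emat[OF X]]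
    by (simp add: matmul_madd_right matmul_midm_right matmul_midm_left flip: matmul_assoc)
  finally have "mshift m n X t = matmul m n (mconst ?B) (madd (midm m n) ?Q)" .
  moreover have "madd (midm m n) ?Q \<in> GLs m n"
    using mlevel_matmul[OF G(1) mlevel_mconst G(2)]
    by (intro unipotent_GLs[OF _ G(1)] matmul_Emat D(1) msoul_Emat X) simp
  ultimately show ?thesis using B GLs_matmul by simp
qed

lemma finite_mshift_not_GLs:
  assumes X: "X \<in> Emat m n" shows "finite {t. mshift m n X t \<notin> GLs m n}"
proof (rule finite_subset)
  show "{t. mshift m n X t \<notin> GLs m n} \<subseteq> {t. \<not> cinvertible (m+2*n) (cshift (m+2*n) (mbody X) t)}"
    using mshift_GLs[OF X] by blast
  show "finite {t. \<not> cinvertible (m+2*n) (cshift (m+2*n) (mbody X) t)}"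
    by (rule finite_not_cinvertible_cshift) (rule mbody_outside[OF Emat_smat[OF X]])
qed

definition polyfun :: "(complex \<Rightarrow> complex) \<Rightarrow> bool" where
  "polyfun h \<longleftrightarrow> (\<exists>p. \<forall>t. h t = poly p t)"

definition gpolyfun :: "(complex \<Rightarrow> grass) \<Rightarrow> bool" where
  "gpolyfun f \<longleftrightarrow> (\<forall>S. polyfun (\<lambda>t. f t S))"

lemma polyfun_const: "polyfun (\<lambda>t. c)"
  unfolding polyfun_def by (rule exI[of _ "[:c:]"]) simp

lemma polyfun_id: "polyfun (\<lambda>t. t)"
  unfolding polyfun_def by (rule exI[of _ "[:0, 1:]"]) simp

lemma polyfun_add: "polyfun f \<Longrightarrow> polyfun g \<Longrightarrow> polyfun (\<lambda>t. f t + g t)"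
  unfolding polyfun_def by (metis poly_add)

lemma polyfun_diff: "polyfun f \<Longrightarrow> polyfun g \<Longrightarrow> polyfun (\<lambda>t. f t - g t)"
  unfolding polyfun_def by (metis poly_diff)

lemma polyfun_mult: "polyfun f \<Longrightarrow> polyfun g \<Longrightarrow> polyfun (\<lambda>t. f t * g t)"
  unfolding polyfun_def by (metis poly_mult)

lemma polyfun_sum: "finite A \<Longrightarrow> (\<And>k. k \<in> A \<Longrightarrow> polyfun (f k)) \<Longrightarrow> polyfun (\<lambda>t. \<Sum>k\<in>A. f k t)"
  by (induction A rule: finite_induct) (simp_all add: polyfun_const polyfun_add)

lemma polyfun_zero_cofinite:
  assumes "polyfun h" "finite Z" "\<And>t. t \<notin> Z \<Longrightarrow> h t = 0" shows "h t = 0"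
proof -
  obtain p where p: "\<And>t. h t = poly p t" using assms(1) unfolding polyfun_def by blast
  have "p = 0"
  proof (rule ccontr)
    assume "p \<noteq> 0"
    hence "finite {t. poly p t = 0}" by (rule poly_roots_finite)
    moreover have "UNIV - Z \<subseteq> {t. poly p t = 0}" using assms(3) p by auto
    ultimately have "finite (UNIV - Z)" by (rule finite_subset[rotated])
    with assms(2) show False by (simp add: infinite_UNIV_char_0)
  qed
  thus ?thesis by (simp add: p)
qed

lemma gpolyfun_const: "gpolyfun (\<lambda>t. a)"
  by (simp add: gpolyfun_def polyfun_const)

lemma gpolyfun_gadd: "gpolyfun f \<Longrightarrow> gpolyfun g \<Longrightarrow> gpolyfun (\<lambda>t. gadd (f t) (g t))"
  by (simp add: gpolyfun_def gadd_def polyfun_add)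

lemma gpolyfun_gscale_id: "gpolyfun (\<lambda>t. gscale t a)"
  unfolding gpolyfun_def gscale_def by (simp add: polyfun_mult polyfun_id polyfun_const)

lemma gpolyfun_gsum: "finite A \<Longrightarrow> (\<And>k. k \<in> A \<Longrightarrow> gpolyfun (f k)) \<Longrightarrow> gpolyfun (\<lambda>t. gsum (\<lambda>k. f k t) A)"
  unfolding gpolyfun_def gsum_def by (simp add: polyfun_sum)

lemma gpolyfun_gmul:
  assumes "gpolyfun f" "gpolyfun g" shows "gpolyfun (\<lambda>t. gmul (f t) (g t))"
  unfolding gpolyfun_def
proof
  fix U show "polyfun (\<lambda>t. gmul (f t) (g t) U)"
  proof (cases "finite U")
    case True
    have "polyfun (\<lambda>t. \<Sum>S\<in>Pow U. gsgn S (U-S) * f t S * g t (U-S))"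
      using assms True unfolding gpolyfun_def by (intro polyfun_sum polyfun_mult polyfun_const) simp_all
    thus ?thesis by (simp add: gmul_finite True)
  qed (simp add: polyfun_const)
qed

lemma gpolyfun_galpha: "gpolyfun f \<Longrightarrow> gpolyfun (\<lambda>t. galpha p (f t))"
  unfolding gpolyfun_def galpha_def by (cases p) (simp_all add: polyfun_mult polyfun_const)

lemma gpolyfun_gprod_list:
  "(\<And>x. x \<in> set xs \<Longrightarrow> gpolyfun (\<lambda>t. e t x)) \<Longrightarrow> gpolyfun (\<lambda>t. gprod_list (map (e t) xs))"
  by (induction xs) (simp_all add: gpolyfun_const gpolyfun_gmul)

lemma gpolyfun_tcoef_columns:
  assumes "\<And>i j. gpolyfun (\<lambda>t. M t i j)"
  shows "gpolyfun (\<lambda>t. tcoef m K (map (\<lambda>j i. M t i j) J))"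
proof (induction K arbitrary: J)
  case Nil then show ?case by (cases J) (simp_all add: gpolyfun_const)
next
  case (Cons k K) then show ?case
    by (cases J) (simp_all add: gpolyfun_const gpolyfun_gmul gpolyfun_galpha assms)
qed

lemma gpolyfun_mshift: "gpolyfun (\<lambda>t. mshift m n X t i j)"
  unfolding mshift_def by (intro gpolyfun_gadd gpolyfun_const gpolyfun_gscale_id)

lemma Poly_carrier:
  assumes "f \<in> Defs.Poly m n r" shows "f X \<in> gcarrier"
proof -
  obtain d where "\<And>\<kappa>. d \<kappa> \<in> gcarrier" and "f = (\<lambda>X. if X \<in> Emat m n
      then gsum (\<lambda>\<kappa>. gmul (d \<kappa>) (gprod_list (map (\<lambda>(i, j). X i j) \<kappa>))) (monoms m n r) else gzero)"
    using assms unfolding Defs.Poly_def by blast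
  then show ?thesis
    by (auto intro!: gcarrier_gsum gcarrier_gmul gcarrier_gprod_list finite_monoms
        simp: smat_carrier[OF Emat_smat])
qed

lemma Poly_outside: "f \<in> Defs.Poly m n r \<Longrightarrow> X \<notin> Emat m n \<Longrightarrow> f X = gzero"
  unfolding Defs.Poly_def by auto

lemma Poly_gpolyfun_mshift:
  assumes "f \<in> Defs.Poly m n r" "X \<in> Emat m n" shows "gpolyfun (\<lambda>t. f (mshift m n X t))"
proof -
  obtain d where "f = (\<lambda>X. if X \<in> Emat m n
      then gsum (\<lambda>\<kappa>. gmul (d \<kappa>) (gprod_list (map (\<lambda>(i, j). X i j) \<kappa>))) (monoms m n r) else gzero)"
    using assms(1) unfolding Defs.Poly_def by blast
  moreover have "gpolyfun (\<lambda>t. gprod_list (map (\<lambda>(i, j). mshift m n X t i j) \<kappa>))" for \<kappa>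
    using gpolyfun_gprod_list[of \<kappa> "\<lambda>t (i, j). mshift m n X t i j"]
    by (simp add: case_prod_beta gpolyfun_mshift)
  ultimately show ?thesis
    using mshift_Emat[OF assms(2)] by (simp add: gpolyfun_gsum gpolyfun_gmul gpolyfun_const finite_monoms)
qed

lemma Psi_gpolyfun_mshift:
  assumes "J \<in> tuples m n r" "X \<in> Emat m n" shows "gpolyfun (\<lambda>t. Psi m n r c J (mshift m n X t))"
proof -
  have "Psi m n r c J (mshift m n X t) = Leval m n r c (map (\<lambda>j i. mshift m n X t i j) J)" for t
    using assms mshift_Emat[OF assms(2)]
    by (simp add: Psi_def map_matvec_basisvec Emat_smat tuples_def)
  then show ?thesis
    unfolding Leval_def
    by (simp add: gpolyfun_gsum gpolyfun_gmul gpolyfun_const finite_tuples gpolyfun_tcoef_columns gpolyfun_mshift)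
qed

section \<open>Surjectivity\<close>

definition eval_at_id :: "nat \<Rightarrow> nat \<Rightarrow> nat \<Rightarrow> (nat list \<Rightarrow> Defs.mat \<Rightarrow> grass) \<Rightarrow> nat list \<Rightarrow> grass" where
  "eval_at_id m n r F = (\<lambda>J. if J \<in> tuples m n r then F J (midm m n) else gzero)"

lemma TP_Poly: "F \<in> TP m n r \<Longrightarrow> J \<in> tuples m n r \<Longrightarrow> F J \<in> Defs.Poly m n r"
  unfolding TP_def by (metis (mono_tags, lifting) mem_Collect_eq)

lemma TP_outside: "F \<in> TP m n r \<Longrightarrow> J \<notin> tuples m n r \<Longrightarrow> F J = (\<lambda>X. gzero)"
  unfolding TP_def by (metis (mono_tags, lifting) mem_Collect_eq)

lemma eval_at_id_TVdual: "F \<in> TP m n r \<Longrightarrow> eval_at_id m n r F \<in> TVdual m n r"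
  unfolding TVdual_def eval_at_id_def using Poly_carrier[OF TP_Poly] by auto

lemma Gamma_eq_Psi_on_GLs:
  assumes F: "F \<in> Gamma m n r" and J: "J \<in> tuples m n r" and Y: "Y \<in> GLs m n"
  shows "F J Y = Psi m n r (eval_at_id m n r F) J Y"
proof -
  let ?g = "minv m n Y"
  have "Rhat m n r ?g F = F" using F minv_GLs(1)[OF Y] by (simp add: Gamma_def)
  hence "F J Y = Rhat m n r ?g F J Y" by simp
  also have "\<dots> = Feval m n r F (midm m n) (map (\<lambda>j. matvec m n Y (basisvec j)) J)"
    using J GLs_Emat[OF Y] minv(2)[OF Y] by (simp add: Rhat_def minv_GLs(2)[OF Y])
  also have "\<dots> = Leval m n r (eval_at_id m n r F) (map (\<lambda>j. matvec m n Y (basisvec j)) J)"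
    unfolding Feval_def Leval_def by (rule gsum_cong) (simp add: eval_at_id_def)
  also have "\<dots> = Psi m n r (eval_at_id m n r F) J Y"
    using J GLs_Emat[OF Y] by (simp add: Psi_def)
  finally show ?thesis .
qed

text \<open>Both sides are polynomial along \<open>t \<mapsto> X + t\<close> and agree for all but finitely many \<open>t\<close>.\<close>

lemma Gamma_eq_Psi:
  assumes F: "F \<in> Gamma m n r" shows "F = Psi m n r (eval_at_id m n r F)"
proof (rule ext, rule ext)
  fix J X
  have FT: "F \<in> TP m n r" using F by (simp add: Gamma_def)
  show "F J X = Psi m n r (eval_at_id m n r F) J X"
  proof (cases "J \<in> tuples m n r \<and> X \<in> Emat m n")
    case True
    hence J: "J \<in> tuples m n r" and X: "X \<in> Emat m n" by auto
    show ?thesis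
    proof (rule ext)
      fix S
      define h where "h t = F J (mshift m n X t) S - Psi m n r (eval_at_id m n r F) J (mshift m n X t) S" for t
      have "polyfun h"
        using Poly_gpolyfun_mshift[OF TP_Poly[OF FT J] X] Psi_gpolyfun_mshift[OF J X]
        unfolding h_def gpolyfun_def by (intro polyfun_diff) simp_all
      moreover have "h t = 0" if "t \<notin> {t. mshift m n X t \<notin> GLs m n}" for t
        using Gamma_eq_Psi_on_GLs[OF F J] that by (simp add: h_def)
      ultimately have "h 0 = 0" by (rule polyfun_zero_cofinite[OF _ finite_mshift_not_GLs[OF X]])
      thus "F J X S = Psi m n r (eval_at_id m n r F) J X S" by (simp add: h_def mshift_0)
    qed
  next
    case False
    then show ?thesis
      using TP_outside[OF FT] Poly_outside[OF TP_Poly[OF FT]] by (auto simp: Psi_def)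
  qed
qed

lemma bij_betw_Psi_Gamma: "bij_betw (Psi m n r) (TVdual m n r) (Gamma m n r)"
proof (rule bij_betw_imageI[OF inj_on_Psi])
  show "Psi m n r ` TVdual m n r = Gamma m n r"
  proof
    show "Psi m n r ` TVdual m n r \<subseteq> Gamma m n r"
      by (auto simp: Gamma_def Psi_TP Psi_Rhat)
    show "Gamma m n r \<subseteq> Psi m n r ` TVdual m n r"
      using Gamma_eq_Psi eval_at_id_TVdual by (fastforce simp: Gamma_def)
  qed
qed

lemma rho_dual_eval_at_id:
  assumes F: "F \<in> Gamma m n r" and g: "g \<in> GLs m n" and inv: "Lhat m n r g F = F"
  shows "rho_dual m n r g (eval_at_id m n r F) = eval_at_id m n r F"
proof (rule ext)
  fix J
  note h = minv(1)[OF g]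
  show "rho_dual m n r g (eval_at_id m n r F) J = eval_at_id m n r F J"
  proof (cases "J \<in> tuples m n r")
    case J: True
    have "rho_dual m n r g (eval_at_id m n r F) J = Psi m n r (eval_at_id m n r F) J (minv m n g)"
      using J h by (simp add: rho_dual_def Psi_def)
    also have "\<dots> = F J (matmul m n (minv m n g) (midm m n))"
      using Gamma_eq_Psi[OF F] by (simp add: matmul_midm_right[OF Emat_smat[OF h]])
    also have "\<dots> = Lhat m n r g F J (midm m n)" using J by (simp add: Lhat_def midm_Emat)
    also have "\<dots> = eval_at_id m n r F J" using J inv by (simp add: eval_at_id_def)
    finally show ?thesis .
  qed (simp add: rho_dual_def eval_at_id_def)
qed

lemma bij_betw_Psi_invariants:
  assumes "H \<subseteq> GLs m n"
  shows "bij_betw (Psi m n r) {c \<in> TVdual m n r. \<forall>g\<in>H. rho_dual m n r g c = c}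
           {F \<in> Gamma m n r. \<forall>g\<in>H. Lhat m n r g F = F}"
proof (rule bij_betw_subset[OF bij_betw_Psi_Gamma])
  let ?inv = "{F \<in> Gamma m n r. \<forall>g\<in>H. Lhat m n r g F = F}"
  show "Psi m n r ` {c \<in> TVdual m n r. \<forall>g\<in>H. rho_dual m n r g c = c} = ?inv"
  proof
    show "Psi m n r ` {c \<in> TVdual m n r. \<forall>g\<in>H. rho_dual m n r g c = c} \<subseteq> ?inv"
      using assms by (auto simp: Gamma_def Psi_TP Psi_Rhat Psi_Lhat)
    show "?inv \<subseteq> Psi m n r ` {c \<in> TVdual m n r. \<forall>g\<in>H. rho_dual m n r g c = c}"
    proof
      fix F assume F: "F \<in> ?inv"
      hence "F = Psi m n r (eval_at_id m n r F)" by (simp add: Gamma_eq_Psi)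
      moreover have "eval_at_id m n r F \<in> TVdual m n r" using F by (simp add: Gamma_def eval_at_id_TVdual)
      ultimately show "F \<in> Psi m n r ` {c \<in> TVdual m n r. \<forall>g\<in>H. rho_dual m n r g c = c}"
        using F assms by (auto intro!: image_eqI rho_dual_eval_at_id)
    qed
  qed
qed simp

theorem proposition3p25:
  fixes m n r :: nat and b :: "nat \<Rightarrow> nat \<Rightarrow> complex"
  assumes "form_even m n b" and "form_supersym m n b" and "form_nondeg m n b"
  shows "bij_betw (Psi m n r) (TVinv m n r b) (GammaOSp m n r b)
    \<and> (\<forall>c\<in>TVinv m n r b. \<forall>d\<in>TVinv m n r b. Psi m n r (tv_add c d) = tp_add (Psi m n r c) (Psi m n r d))
    \<and> (\<forall>a\<in>gcarrier. \<forall>c\<in>TVinv m n r b. Psi m n r (tv_smul a c) = tp_smul a (Psi m n r c))"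
proof -
  have "OSp m n b \<subseteq> GLs m n" by (auto simp: OSp_def)
  hence "bij_betw (Psi m n r) (TVinv m n r b) (GammaOSp m n r b)"
    unfolding TVinv_def GammaOSp_def by (rule bij_betw_Psi_invariants)
  thus ?thesis by (simp add: Psi_tv_add Psi_tv_smul)
qed
end
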